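(* Let $\mathbb A$ be an abelian category with enough projective objects. Let $(f_0,f_1):a\to b$ be a morphism in $\mathbb A^{[1]}_c$ and let $g:\mathrm{Ker}(a)\to\mathrm{Ker}(b)$ and $h:\mathrm{Coker}(a)\to\mathrm{Coker}(b)$ be the induced morphisms. Then $(f_0,f_1)$ is fully cofaithful in $\mathbb A^{[1]}_c$ if and only if $h$ is an isomorphism and $g$ is an epimorphism in $\mathbb A$.
   Context: Let $\mathbb A$ be an abelian category. The 2-category $\mathbb A^{[1]}$ has as objects the morphisms $a:A_1\to A_0$ of $\mathbb A$. For objects $a:A_1\to A_0$ and $b:B_1\to B_0$, a morphism $a\to b$ is a pair $(f_0,f_1)$ of morphisms $f_i:A_i\to B_i$ of $\mathbb A$ with $b f_1=f_0 a$; composition is componentwise. A 2-arrow $(f_0,f_1)\Rightarrow(g_0,g_1)$ between morphisms $a\to b$ is a morphism $\alpha:A_0\to B_1$ of $\mathbb A$ with $f_1-g_1=\alpha a$ and $f_0-g_0=b\alpha$; vertical composition is addition of such $\alpha$'s, and whiskering is given by $(h_0,h_1)\circ\alpha=h_1\alpha$ and $\alpha\circ(e_0,e_1)=\alpha e_0$. All 2-arrows are invertible, so each $\mathbf{Hom}(a,b)$ is a groupoid. $\mathbb A^{[1]}_c$ is the full 2-subcategory of $\mathbb A^{[1]}$ on the objects $a:A_1\to A_0$ with $A_0$ projective in $\mathbb A$. A morphism $(f_0,f_1):a\to b$ induces $g:\mathrm{Ker}(a)\to\mathrm{Ker}(b)$ (restriction of $f_1$) and $h:\mathrm{Coker}(a)\to\mathrm{Coker}(b)$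 (induced by $f_0$). A morphism $f:a\to b$ of $\mathbb A^{[1]}_c$ is fully cofaithful in $\mathbb A^{[1]}_c$ if for every object $x$ of $\mathbb A^{[1]}_c$ the functor $-\circ f:\mathbf{Hom}(b,x)\to\mathbf{Hom}(a,x)$ is full and faithful. *)

theory Defs
  imports Main
begin

record ('o, 'm) cat =
  Ob  :: "'o set"
  Ar  :: "'m set"
  dom :: "'m \<Rightarrow> 'o"
  cod :: "'m \<Rightarrow> 'o"
  idm :: "'o \<Rightarrow> 'm"
  cmp :: "'m \<Rightarrow> 'm \<Rightarrow> 'm"      (* cmp C g f = g \<circ> f *)
  add :: "'m \<Rightarrow> 'm \<Rightarrow> 'm"
  neg :: "'m \<Rightarrow> 'm"
  zer :: "'o \<Rightarrow> 'o \<Rightarrow> 'm"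

definition hom :: "('o,'m) cat \<Rightarrow> 'o \<Rightarrow> 'o \<Rightarrow> 'm set" where
  "hom C A B = {f \<in> Ar C. dom C f = A \<and> cod C f = B}"

definition sub :: "('o,'m) cat \<Rightarrow> 'm \<Rightarrow> 'm \<Rightarrow> 'm" where
  "sub C f g = add C f (neg C g)"

definition category :: "('o,'m) cat \<Rightarrow> bool" where
  "category C \<longleftrightarrow>
     (\<forall>f\<in>Ar C. dom C f \<in> Ob C \<and> cod C f \<in> Ob C) \<and>
     (\<forall>A\<in>Ob C. idm C A \<in> hom C A A) \<and>
     (\<forall>A B D f g. f \<in> hom C A B \<longrightarrow> g \<in> hom C B D \<longrightarrow> cmp C g f \<in> hom C A D) \<and>
     (\<forall>A B D E f g h. f \<in> hom C A B \<longrightarrow> g \<in> hom C B D \<longrightarrow> h \<in> hom C D E \<longrightarrow>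
         cmp C h (cmp C g f) = cmp C (cmp C h g) f) \<and>
     (\<forall>A B f. f \<in> hom C A B \<longrightarrow> cmp C f (idm C A) = f \<and> cmp C (idm C B) f = f)"

definition preadditive :: "('o,'m) cat \<Rightarrow> bool" where
  "preadditive C \<longleftrightarrow> category C \<and>
     (\<forall>A\<in>Ob C. \<forall>B\<in>Ob C.
        zer C A B \<in> hom C A B \<and>
        (\<forall>f\<in>hom C A B. \<forall>g\<in>hom C A B.
           add C f g \<in> hom C A B \<and> add C f g = add C g f) \<and>
        (\<forall>f\<in>hom C A B. \<forall>g\<in>hom C A B. \<forall>h\<in>hom C A B.
           add C (add C f g) h = add C f (add C g h)) \<and>
        (\<forall>f\<in>hom C A B. add C f (zer C A B) = f \<and> neg C f \<in> hom C A B \<and>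
           add C f (neg C f) = zer C A B)) \<and>
     (\<forall>A B D f f' g. f \<in> hom C A B \<longrightarrow> f' \<in> hom C A B \<longrightarrow> g \<in> hom C B D \<longrightarrow>
         cmp C g (add C f f') = add C (cmp C g f) (cmp C g f')) \<and>
     (\<forall>A B D f g g'. f \<in> hom C A B \<longrightarrow> g \<in> hom C B D \<longrightarrow> g' \<in> hom C B D \<longrightarrow>
         cmp C (add C g g') f = add C (cmp C g f) (cmp C g' f))"

definition mono :: "('o,'m) cat \<Rightarrow> 'm \<Rightarrow> bool" where
  "mono C m \<longleftrightarrow> m \<in> Ar C \<and>
     (\<forall>X u v. u \<in> hom C X (dom C m) \<longrightarrow> v \<in> hom C X (dom C m) \<longrightarrow>
        cmp C m u = cmp C m v \<longrightarrow> u = v)"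

definition epi :: "('o,'m) cat \<Rightarrow> 'm \<Rightarrow> bool" where
  "epi C e \<longleftrightarrow> e \<in> Ar C \<and>
     (\<forall>X u v. u \<in> hom C (cod C e) X \<longrightarrow> v \<in> hom C (cod C e) X \<longrightarrow>
        cmp C u e = cmp C v e \<longrightarrow> u = v)"

definition iso :: "('o,'m) cat \<Rightarrow> 'm \<Rightarrow> bool" where
  "iso C f \<longleftrightarrow> f \<in> Ar C \<and>
     (\<exists>g \<in> hom C (cod C f) (dom C f).
        cmp C g f = idm C (dom C f) \<and> cmp C f g = idm C (cod C f))"

definition is_kernel :: "('o,'m) cat \<Rightarrow> 'm \<Rightarrow> 'm \<Rightarrow> bool" where
  "is_kernel C f k \<longleftrightarrow> f \<in> Ar C \<and> k \<in> Ar C \<and> cod C k = dom C f \<and>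
     cmp C f k = zer C (dom C k) (cod C f) \<and>
     (\<forall>t. t \<in> Ar C \<longrightarrow> cod C t = dom C f \<longrightarrow> cmp C f t = zer C (dom C t) (cod C f) \<longrightarrow>
        (\<exists>!u. u \<in> hom C (dom C t) (dom C k) \<and> cmp C k u = t))"

definition is_cokernel :: "('o,'m) cat \<Rightarrow> 'm \<Rightarrow> 'm \<Rightarrow> bool" where
  "is_cokernel C f c \<longleftrightarrow> f \<in> Ar C \<and> c \<in> Ar C \<and> dom C c = cod C f \<and>
     cmp C c f = zer C (dom C f) (cod C c) \<and>
     (\<forall>t. t \<in> Ar C \<longrightarrow> dom C t = cod C f \<longrightarrow> cmp C t f = zer C (dom C f) (cod C t) \<longrightarrow>
        (\<exists>!u. u \<in> hom C (cod C c) (cod C t) \<and> cmp C u c = t))"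

definition abelian :: "('o,'m) cat \<Rightarrow> bool" where
  "abelian C \<longleftrightarrow> preadditive C \<and>
     (\<exists>Z\<in>Ob C. \<forall>A\<in>Ob C. hom C Z A = {zer C Z A} \<and> hom C A Z = {zer C A Z}) \<and>
     (\<forall>A\<in>Ob C. \<forall>B\<in>Ob C. \<exists>P p1 p2. p1 \<in> hom C P A \<and> p2 \<in> hom C P B \<and>
        (\<forall>X f g. f \<in> hom C X A \<longrightarrow> g \<in> hom C X B \<longrightarrow>
           (\<exists>!u. u \<in> hom C X P \<and> cmp C p1 u = f \<and> cmp C p2 u = g))) \<and>
     (\<forall>f\<in>Ar C. \<exists>k. is_kernel C f k) \<and>
     (\<forall>f\<in>Ar C. \<exists>c. is_cokernel C f c) \<and>
     (\<forall>m. mono C m \<longrightarrow> (\<exists>f. is_kernel C f m)) \<and>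
     (\<forall>e. epi C e \<longrightarrow> (\<exists>f. is_cokernel C f e))"

definition projective :: "('o,'m) cat \<Rightarrow> 'o \<Rightarrow> bool" where
  "projective C P \<longleftrightarrow> P \<in> Ob C \<and>
     (\<forall>e f. epi C e \<longrightarrow> f \<in> hom C P (cod C e) \<longrightarrow>
        (\<exists>g \<in> hom C P (dom C e). cmp C e g = f))"

definition enough_projectives :: "('o,'m) cat \<Rightarrow> bool" where
  "enough_projectives C \<longleftrightarrow>
     (\<forall>A\<in>Ob C. \<exists>P e. projective C P \<and> e \<in> hom C P A \<and> epi C e)"

text \<open>Objects of A^[1]_c: arrows a : A1 \<rightarrow> A0 with A0 projective.\<close>
definition obj_c :: "('o,'m) cat \<Rightarrow> 'm \<Rightarrow> bool" where
  "obj_c C a \<longleftrightarrow> a \<in> Ar C \<and> projective C (cod C a)"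

text \<open>A morphism (f0,f1) : a \<rightarrow> b, with f_i : A_i \<rightarrow> B_i and b f1 = f0 a.\<close>
definition mor1 :: "('o,'m) cat \<Rightarrow> 'm \<Rightarrow> 'm \<Rightarrow> 'm \<times> 'm \<Rightarrow> bool" where
  "mor1 C a b f \<longleftrightarrow> a \<in> Ar C \<and> b \<in> Ar C \<and>
     fst f \<in> hom C (cod C a) (cod C b) \<and> snd f \<in> hom C (dom C a) (dom C b) \<and>
     cmp C b (snd f) = cmp C (fst f) a"

text \<open>A 2-arrow alpha : (f0,f1) \<Rightarrow> (g0,g1) between morphisms a \<rightarrow> b.\<close>
definition arr2 :: "('o,'m) cat \<Rightarrow> 'm \<Rightarrow> 'm \<Rightarrow> 'm \<times> 'm \<Rightarrow> 'm \<times> 'm \<Rightarrow> 'm \<Rightarrow> bool" where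
  "arr2 C a b f g \<alpha> \<longleftrightarrow> mor1 C a b f \<and> mor1 C a b g \<and>
     \<alpha> \<in> hom C (cod C a) (dom C b) \<and>
     sub C (snd f) (snd g) = cmp C \<alpha> a \<and> sub C (fst f) (fst g) = cmp C b \<alpha>"

definition comp1 :: "('o,'m) cat \<Rightarrow> 'm \<times> 'm \<Rightarrow> 'm \<times> 'm \<Rightarrow> 'm \<times> 'm" where
  "comp1 C u f = (cmp C (fst u) (fst f), cmp C (snd u) (snd f))"

text \<open>f : a \<rightarrow> b is fully cofaithful in A^[1]_c: for every object x of A^[1]_c,
  the functor - \<circ> f : Hom(b,x) \<rightarrow> Hom(a,x) (on 2-arrows: alpha \<mapsto> alpha f0)
  is full and faithful.\<close>
definition fully_cofaithful_c :: "('o,'m) cat \<Rightarrow> 'm \<Rightarrow> 'm \<Rightarrow> 'm \<times> 'm \<Rightarrow> bool" where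
  "fully_cofaithful_c C a b f \<longleftrightarrow>
     (\<forall>x. obj_c C x \<longrightarrow>
        (\<forall>u v. mor1 C b x u \<longrightarrow> mor1 C b x v \<longrightarrow>
           \<comment> \<open>full\<close>
           (\<forall>\<beta>. arr2 C a x (comp1 C u f) (comp1 C v f) \<beta> \<longrightarrow>
              (\<exists>\<alpha>. arr2 C b x u v \<alpha> \<and> cmp C \<alpha> (fst f) = \<beta>)) \<and>
           \<comment> \<open>faithful\<close>
           (\<forall>\<alpha> \<alpha>'. arr2 C b x u v \<alpha> \<longrightarrow> arr2 C b x u v \<alpha>' \<longrightarrow>
              cmp C \<alpha> (fst f) = cmp C \<alpha>' (fst f) \<longrightarrow> \<alpha> = \<alpha>')))"

end

theory Submission
  imports Defs
begin

text \<open>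
  The proof goes through the pushout property of this square, split into two halves:
  \<open>(f0, b)\<close> is jointly epic, and every cocone \<open>(\<beta>, w)\<close> on \<open>(a, f1)\<close> extends along
  \<open>(f0, b)\<close>.  Testing full cofaithfulness on the objects \<open>X \<rightarrow> 0\<close> of \<open>A^[1]_c\<close> shows that
  faithfulness is the first half and fullness the second.  It then remains to compare the pushout property with the induced maps
  \<open>g\<close> on kernels and \<open>h\<close> on cokernels: joint epicity is equivalent to \<open>h\<close> being epi, an
  extension of the cocone \<open>(ca, 0)\<close> is a left inverse of \<open>h\<close>, and presenting the pushout as
  the cokernel of \<open>\<tau> = (a, f1) : A1 \<rightarrow> A0 \<oplus> B1\<close> turns the remaining statements
  (\<open>g\<close> epi, and the converse) into diagram chases, done with projective probes.
\<close>

section \<open>Additive calculus in an abelian category\<close>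

locale abelian_cat =
  fixes C :: "('o,'m) cat"
  assumes abelian: "abelian C"
begin

lemma preadditive: "preadditive C"
  using abelian unfolding abelian_def by blast

lemma category: "category C"
  using preadditive unfolding preadditive_def by blast

lemma homD:
  assumes "f \<in> hom C A B"
  shows "f \<in> Ar C" "dom C f = A" "cod C f = B" "A \<in> Ob C" "B \<in> Ob C"
  using assms category unfolding hom_def category_def by auto

lemma ArD: "f \<in> Ar C \<Longrightarrow> f \<in> hom C (dom C f) (cod C f)"
  by (simp add: hom_def)

lemma comp: "f \<in> hom C A B \<Longrightarrow> g \<in> hom C B D \<Longrightarrow> cmp C g f \<in> hom C A D"
  using category[unfolded category_def, THEN conjunct2, THEN conjunct2, THEN conjunct1] by blast

lemma assoc: "f \<in> hom C A B \<Longrightarrow> g \<in> hom C B D \<Longrightarrow> h \<in> hom C D E \<Longrightarrow>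
    cmp C h (cmp C g f) = cmp C (cmp C h g) f"
  using category[unfolded category_def, THEN conjunct2, THEN conjunct2, THEN conjunct2, THEN conjunct1]
  by blast

lemma id_hom [intro]: "A \<in> Ob C \<Longrightarrow> idm C A \<in> hom C A A"
  using category[unfolded category_def, THEN conjunct2, THEN conjunct1] by blast

lemma idr: "f \<in> hom C A B \<Longrightarrow> cmp C f (idm C A) = f"
  using category[unfolded category_def, THEN conjunct2, THEN conjunct2, THEN conjunct2, THEN conjunct2]
  by blast

lemma idl: "f \<in> hom C A B \<Longrightarrow> cmp C (idm C B) f = f"
  using category[unfolded category_def, THEN conjunct2, THEN conjunct2, THEN conjunct2, THEN conjunct2]
  by blast

lemma hom_group:
  assumes "A \<in> Ob C" "B \<in> Ob C"
  shows "zer C A B \<in> hom C A B"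
    and "\<And>f g. f \<in> hom C A B \<Longrightarrow> g \<in> hom C A B \<Longrightarrow> add C f g \<in> hom C A B \<and> add C f g = add C g f"
    and "\<And>f g h. f \<in> hom C A B \<Longrightarrow> g \<in> hom C A B \<Longrightarrow> h \<in> hom C A B \<Longrightarrow>
           add C (add C f g) h = add C f (add C g h)"
    and "\<And>f. f \<in> hom C A B \<Longrightarrow>
           add C f (zer C A B) = f \<and> neg C f \<in> hom C A B \<and> add C f (neg C f) = zer C A B"
  using preadditive[unfolded preadditive_def, THEN conjunct2, THEN conjunct1, rule_format, OF assms]
  by blast+

lemma zer_hom [intro]: "A \<in> Ob C \<Longrightarrow> B \<in> Ob C \<Longrightarrow> zer C A B \<in> hom C A B"
  by (rule hom_group(1))

lemma add_hom [intro]: "f \<in> hom C A B \<Longrightarrow> g \<in> hom C A B \<Longrightarrow> add C f g \<in> hom C A B"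
  using hom_group(2)[OF homD(4,5)] by blast

lemma add_comm: "f \<in> hom C A B \<Longrightarrow> g \<in> hom C A B \<Longrightarrow> add C f g = add C g f"
  using hom_group(2)[OF homD(4,5)] by blast

lemma add_assoc: "f \<in> hom C A B \<Longrightarrow> g \<in> hom C A B \<Longrightarrow> h \<in> hom C A B \<Longrightarrow>
    add C (add C f g) h = add C f (add C g h)"
  using hom_group(3)[OF homD(4,5)] by blast

lemma add_zer: "f \<in> hom C A B \<Longrightarrow> add C f (zer C A B) = f"
  using hom_group(4)[OF homD(4,5)] by blast

lemma neg_hom [intro]: "f \<in> hom C A B \<Longrightarrow> neg C f \<in> hom C A B"
  using hom_group(4)[OF homD(4,5)] by blast

lemma add_neg: "f \<in> hom C A B \<Longrightarrow> add C f (neg C f) = zer C A B"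
  using hom_group(4)[OF homD(4,5)] by blast

lemma cmp_add_r: "f \<in> hom C A B \<Longrightarrow> f' \<in> hom C A B \<Longrightarrow> g \<in> hom C B D \<Longrightarrow>
    cmp C g (add C f f') = add C (cmp C g f) (cmp C g f')"
  using preadditive[unfolded preadditive_def, THEN conjunct2, THEN conjunct2, THEN conjunct1] by blast

lemma cmp_add_l: "f \<in> hom C A B \<Longrightarrow> g \<in> hom C B D \<Longrightarrow> g' \<in> hom C B D \<Longrightarrow>
    cmp C (add C g g') f = add C (cmp C g f) (cmp C g' f)"
  using preadditive[unfolded preadditive_def, THEN conjunct2, THEN conjunct2, THEN conjunct2] by blast

lemma sub_hom [intro]: "f \<in> hom C A B \<Longrightarrow> g \<in> hom C A B \<Longrightarrow> sub C f g \<in> hom C A B"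
  unfolding sub_def by blast

lemma zer_add: assumes "f \<in> hom C A B" shows "add C (zer C A B) f = f"
  using add_comm[OF zer_hom[OF homD(4,5)[OF assms]] assms] add_zer[OF assms] by simp

lemma add_cancel:
  assumes f: "f \<in> hom C A B" and g: "g \<in> hom C A B" and h: "h \<in> hom C A B"
    and eq: "add C f g = add C f h"
  shows "g = h"
proof -
  have nf: "neg C f \<in> hom C A B" using f by blast
  have nf_f: "add C (neg C f) f = zer C A B"
    using add_comm[OF nf f] add_neg[OF f] by simp
  have "g = add C (add C (neg C f) f) g" using nf_f zer_add[OF g] by simp
  also have "\<dots> = add C (neg C f) (add C f h)" using add_assoc[OF nf f g] eq by simp
  also have "\<dots> = h" using add_assoc[OF nf f h] nf_f zer_add[OF h] by simp
  finally show ?thesis .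
qed

lemma neg_unique:
  assumes "f \<in> hom C A B" "g \<in> hom C A B" "add C f g = zer C A B"
  shows "g = neg C f"
  using add_cancel[OF assms(1,2) neg_hom[OF assms(1)]] assms(3) add_neg[OF assms(1)] by simp

lemma sub_zer_iff:
  assumes f: "f \<in> hom C A B" and g: "g \<in> hom C A B"
  shows "sub C f g = zer C A B \<longleftrightarrow> f = g"
proof
  assume "sub C f g = zer C A B"
  then have "add C (neg C g) f = zer C A B"
    using add_comm[OF f neg_hom[OF g]] by (simp add: sub_def)
  then have "f = neg C (neg C g)" using neg_unique[OF neg_hom[OF g] f] by simp
  moreover have "g = neg C (neg C g)"
    using neg_unique[OF neg_hom[OF g] g] add_comm[OF g neg_hom[OF g]] add_neg[OF g] by simp
  ultimately show "f = g" by simp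
qed (simp add: sub_def add_neg[OF g])

lemma sub_self: "f \<in> hom C A B \<Longrightarrow> sub C f f = zer C A B"
  using sub_zer_iff by blast

lemma neg_neg: assumes "f \<in> hom C A B" shows "neg C (neg C f) = f"
  using neg_unique[OF neg_hom[OF assms] assms] add_comm[OF neg_hom[OF assms] assms] add_neg[OF assms]
  by simp

lemma neg_zer: "A \<in> Ob C \<Longrightarrow> B \<in> Ob C \<Longrightarrow> neg C (zer C A B) = zer C A B"
  using neg_unique[OF zer_hom zer_hom add_zer[OF zer_hom]] by simp

lemma sub_zer: "f \<in> hom C A B \<Longrightarrow> sub C f (zer C A B) = f"
  using neg_zer[OF homD(4,5)] add_zer by (simp add: sub_def)

lemma zer_sub: "f \<in> hom C A B \<Longrightarrow> sub C (zer C A B) f = neg C f"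
  by (simp add: sub_def zer_add neg_hom)

lemma add_sub_cancel:
  assumes f: "f \<in> hom C A B" and g: "g \<in> hom C A B"
  shows "add C f (sub C g f) = g"
proof -
  have "add C f (sub C g f) = add C (add C f (neg C f)) g"
    unfolding sub_def using add_comm[OF g neg_hom[OF f]] add_assoc[OF f neg_hom[OF f] g] by simp
  then show ?thesis using add_neg[OF f] zer_add[OF g] by simp
qed

lemma cmp_zer_r:
  assumes g: "g \<in> hom C B D" and A: "A \<in> Ob C"
  shows "cmp C g (zer C A B) = zer C A D"
proof -
  have z: "zer C A B \<in> hom C A B" using A homD(4)[OF g] by blast
  have gz: "cmp C g (zer C A B) \<in> hom C A D" using comp[OF z g] .
  have "add C (cmp C g (zer C A B)) (cmp C g (zer C A B)) = add C (cmp C g (zer C A B)) (zer C A D)"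
    using cmp_add_r[OF z z g] add_zer[OF z] add_zer[OF gz] by simp
  then show ?thesis using add_cancel[OF gz gz] A homD(5)[OF g] by blast
qed

lemma cmp_zer_l:
  assumes f: "f \<in> hom C A B" and D: "D \<in> Ob C"
  shows "cmp C (zer C B D) f = zer C A D"
proof -
  have z: "zer C B D \<in> hom C B D" using D homD(5)[OF f] by blast
  have zf: "cmp C (zer C B D) f \<in> hom C A D" using comp[OF f z] .
  have "add C (cmp C (zer C B D) f) (cmp C (zer C B D) f) = add C (cmp C (zer C B D) f) (zer C A D)"
    using cmp_add_l[OF f z z] add_zer[OF z] add_zer[OF zf] by simp
  then show ?thesis using add_cancel[OF zf zf] D homD(4)[OF f] by blast
qed

lemma cmp_neg_r:
  assumes f: "f \<in> hom C A B" and g: "g \<in> hom C B D"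
  shows "cmp C g (neg C f) = neg C (cmp C g f)"
proof (rule neg_unique)
  show "cmp C g f \<in> hom C A D" "cmp C g (neg C f) \<in> hom C A D"
    using comp[OF f g] comp[OF neg_hom[OF f] g] by blast+
  show "add C (cmp C g f) (cmp C g (neg C f)) = zer C A D"
    using cmp_add_r[OF f neg_hom[OF f] g] add_neg[OF f] cmp_zer_r[OF g homD(4)[OF f]] by simp
qed

lemma cmp_neg_l:
  assumes f: "f \<in> hom C A B" and g: "g \<in> hom C B D"
  shows "cmp C (neg C g) f = neg C (cmp C g f)"
proof (rule neg_unique)
  show "cmp C g f \<in> hom C A D" "cmp C (neg C g) f \<in> hom C A D"
    using comp[OF f g] comp[OF f neg_hom[OF g]] by blast+
  show "add C (cmp C g f) (cmp C (neg C g) f) = zer C A D"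
    using cmp_add_l[OF f g neg_hom[OF g]] add_neg[OF g] cmp_zer_l[OF f homD(5)[OF g]] by simp
qed

lemma cmp_sub_r: "f \<in> hom C A B \<Longrightarrow> f' \<in> hom C A B \<Longrightarrow> g \<in> hom C B D \<Longrightarrow>
    cmp C g (sub C f f') = sub C (cmp C g f) (cmp C g f')"
  unfolding sub_def by (simp add: cmp_add_r cmp_neg_r neg_hom)

lemma cmp_sub_l: "f \<in> hom C A B \<Longrightarrow> g \<in> hom C B D \<Longrightarrow> g' \<in> hom C B D \<Longrightarrow>
    cmp C (sub C g g') f = sub C (cmp C g f) (cmp C g' f)"
  unfolding sub_def by (simp add: cmp_add_l cmp_neg_l neg_hom)

section \<open>Monomorphisms, epimorphisms, kernels and cokernels\<close>

lemma ex1_unique: "\<exists>!x. P x \<Longrightarrow> P y \<Longrightarrow> P y' \<Longrightarrow> y = y'"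
  by blast

lemmas abelian_axioms' = abelian[unfolded abelian_def, THEN conjunct2]

lemma zero_axiom: "\<exists>Z\<in>Ob C. \<forall>A\<in>Ob C. hom C Z A = {zer C Z A} \<and> hom C A Z = {zer C A Z}"
  using abelian_axioms' by (rule conjunct1)

lemma product_axiom:
  "\<forall>A\<in>Ob C. \<forall>B\<in>Ob C. \<exists>P p1 p2. p1 \<in> hom C P A \<and> p2 \<in> hom C P B \<and>
     (\<forall>X f g. f \<in> hom C X A \<longrightarrow> g \<in> hom C X B \<longrightarrow>
        (\<exists>!u. u \<in> hom C X P \<and> cmp C p1 u = f \<and> cmp C p2 u = g))"
  using abelian_axioms'[THEN conjunct2] by (rule conjunct1)

lemma has_kernel: "f \<in> Ar C \<Longrightarrow> \<exists>k. is_kernel C f k"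
  using abelian_axioms'[THEN conjunct2, THEN conjunct2, THEN conjunct1] by blast

lemma has_cokernel: "f \<in> Ar C \<Longrightarrow> \<exists>c. is_cokernel C f c"
  using abelian_axioms'[THEN conjunct2, THEN conjunct2, THEN conjunct2, THEN conjunct1] by blast

lemma mono_is_kernel: "mono C m \<Longrightarrow> \<exists>f. is_kernel C f m"
  using abelian_axioms'[THEN conjunct2, THEN conjunct2, THEN conjunct2, THEN conjunct2, THEN conjunct1]
  by blast

lemma epi_cancel: "epi C e \<Longrightarrow> u \<in> hom C (cod C e) X \<Longrightarrow> v \<in> hom C (cod C e) X \<Longrightarrow>
    cmp C u e = cmp C v e \<Longrightarrow> u = v"
  unfolding epi_def by blast

lemma mono_cancel: "mono C m \<Longrightarrow> u \<in> hom C X (dom C m) \<Longrightarrow> v \<in> hom C X (dom C m) \<Longrightarrow>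
    cmp C m u = cmp C m v \<Longrightarrow> u = v"
  unfolding mono_def by blast

text \<open>In an additive setting it suffices to cancel against zero.\<close>
lemma epi_zeroI:
  assumes e: "e \<in> hom C A B"
    and kills: "\<And>Y u. u \<in> hom C B Y \<Longrightarrow> cmp C u e = zer C A Y \<Longrightarrow> u = zer C B Y"
  shows "epi C e"
  unfolding epi_def
proof (intro conjI allI impI)
  show "e \<in> Ar C" using homD[OF e] by simp
  fix X u v assume "u \<in> hom C (cod C e) X" "v \<in> hom C (cod C e) X" and eq: "cmp C u e = cmp C v e"
  then have u: "u \<in> hom C B X" and v: "v \<in> hom C B X" using homD(3)[OF e] by auto
  have "cmp C (sub C u v) e = zer C A X"
    using cmp_sub_l[OF e u v] eq sub_self[OF comp[OF e v]] by simp
  then have "sub C u v = zer C B X" using kills[of "sub C u v" X] u v by blast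
  then show "u = v" using sub_zer_iff[OF u v] by simp
qed

lemma mono_zeroI:
  assumes m: "m \<in> hom C A B"
    and kills: "\<And>Y y. y \<in> hom C Y A \<Longrightarrow> cmp C m y = zer C Y B \<Longrightarrow> y = zer C Y A"
  shows "mono C m"
  unfolding mono_def
proof (intro conjI allI impI)
  show "m \<in> Ar C" using homD[OF m] by simp
  fix X u v assume "u \<in> hom C X (dom C m)" "v \<in> hom C X (dom C m)" and eq: "cmp C m u = cmp C m v"
  then have u: "u \<in> hom C X A" and v: "v \<in> hom C X A" using homD(2)[OF m] by auto
  have "cmp C m (sub C u v) = zer C X B"
    using cmp_sub_r[OF u v m] eq sub_self[OF comp[OF v m]] by simp
  then have "sub C u v = zer C X A" using kills[of "sub C u v" X] u v by blast
  then show "u = v" using sub_zer_iff[OF u v] by simp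
qed

lemma epi_zero:
  assumes e: "epi C e" "e \<in> hom C A B" and u: "u \<in> hom C B Y" and ue: "cmp C u e = zer C A Y"
  shows "u = zer C B Y"
proof (rule epi_cancel[OF e(1)])
  show "u \<in> hom C (cod C e) Y" "zer C B Y \<in> hom C (cod C e) Y"
    using u homD[OF u] homD(3)[OF e(2)] by auto
  show "cmp C u e = cmp C (zer C B Y) e" using ue cmp_zer_l[OF e(2) homD(5)[OF u]] by simp
qed

lemma mono_zero:
  assumes m: "mono C m" "m \<in> hom C A B" and y: "y \<in> hom C Y A" and my: "cmp C m y = zer C Y B"
  shows "y = zer C Y A"
proof (rule mono_cancel[OF m(1)])
  show "y \<in> hom C Y (dom C m)" "zer C Y A \<in> hom C Y (dom C m)"
    using y homD[OF y] homD(2)[OF m(2)] by auto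
  show "cmp C m y = cmp C m (zer C Y A)" using my cmp_zer_r[OF m(2) homD(4)[OF y]] by simp
qed

lemma epi_left_factor:
  assumes c: "c \<in> hom C P E" and s: "s \<in> hom C E B" and sc: "epi C (cmp C s c)"
  shows "epi C s"
proof (rule epi_zeroI[OF s])
  fix Y u assume u: "u \<in> hom C B Y" and us: "cmp C u s = zer C E Y"
  have "cmp C u (cmp C s c) = zer C P Y" using assoc[OF c s u] us cmp_zer_l[OF c homD(5)[OF u]] by simp
  then show "u = zer C B Y" using epi_zero[OF sc comp[OF c s] u] by blast
qed

lemma is_kernelD:
  assumes "is_kernel C f k"
  shows "f \<in> Ar C" "k \<in> Ar C" "cod C k = dom C f" "cmp C f k = zer C (dom C k) (cod C f)"
    "\<And>t. t \<in> Ar C \<Longrightarrow> cod C t = dom C f \<Longrightarrow> cmp C f t = zer C (dom C t) (cod C f) \<Longrightarrow>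
        \<exists>!u. u \<in> hom C (dom C t) (dom C k) \<and> cmp C k u = t"
  using assms unfolding is_kernel_def by blast+

lemma ker_hom: "is_kernel C f k \<Longrightarrow> f \<in> hom C A B \<Longrightarrow> k \<in> hom C (dom C k) A"
  using ArD[OF is_kernelD(2)] is_kernelD(3) homD(2) by metis

lemma ker_zero: "is_kernel C f k \<Longrightarrow> f \<in> hom C A B \<Longrightarrow> cmp C f k = zer C (dom C k) B"
  using is_kernelD(4) homD(3) by metis

lemma ker_factor:
  assumes k: "is_kernel C f k" and f: "f \<in> hom C A B" and t: "t \<in> hom C T A"
    and ft: "cmp C f t = zer C T B"
  shows "\<exists>u\<in>hom C T (dom C k). cmp C k u = t"
  using is_kernelD(5)[OF k, of t] homD[OF t] homD[OF f] ft by auto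

text \<open>Kernels are monic and cokernels epic, by uniqueness of the induced factorisation.\<close>
lemma ker_mono:
  assumes k: "is_kernel C f k"
  shows "mono C k"
  unfolding mono_def
proof (intro conjI allI impI)
  show "k \<in> Ar C" using is_kernelD(2)[OF k] .
  have f: "f \<in> hom C (dom C f) (cod C f)" using ArD[OF is_kernelD(1)[OF k]] .
  have kh: "k \<in> hom C (dom C k) (dom C f)" using ker_hom[OF k f] .
  fix X u v assume u: "u \<in> hom C X (dom C k)" and v: "v \<in> hom C X (dom C k)"
    and eq: "cmp C k u = cmp C k v"
  define t where "t = cmp C k u"
  have t: "t \<in> hom C X (dom C f)" using comp[OF u kh] unfolding t_def .
  have "cmp C f t = cmp C (cmp C f k) u" unfolding t_def using assoc[OF u kh f] .
  also have "\<dots> = zer C X (cod C f)"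
    using ker_zero[OF k f] cmp_zer_l[OF u homD(5)[OF f]] by simp
  finally have ft: "cmp C f t = zer C (dom C t) (cod C f)" using homD(2)[OF t] by simp
  have ex: "\<exists>!w. w \<in> hom C (dom C t) (dom C k) \<and> cmp C k w = t"
    using is_kernelD(5)[OF k homD(1)[OF t] homD(3)[OF t] ft] .
  have u_fac: "u \<in> hom C (dom C t) (dom C k) \<and> cmp C k u = t" using u homD(2)[OF t] t_def by simp
  have v_fac: "v \<in> hom C (dom C t) (dom C k) \<and> cmp C k v = t" using v eq homD(2)[OF t] t_def by simp
  show "u = v" by (rule ex1_unique[OF ex u_fac v_fac])
qed

lemma is_cokernelD:
  assumes "is_cokernel C f c"
  shows "f \<in> Ar C" "c \<in> Ar C" "dom C c = cod C f" "cmp C c f = zer C (dom C f) (cod C c)"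
    "\<And>t. t \<in> Ar C \<Longrightarrow> dom C t = cod C f \<Longrightarrow> cmp C t f = zer C (dom C f) (cod C t) \<Longrightarrow>
        \<exists>!u. u \<in> hom C (cod C c) (cod C t) \<and> cmp C u c = t"
  using assms unfolding is_cokernel_def by blast+

lemma cok_hom: "is_cokernel C f c \<Longrightarrow> f \<in> hom C A B \<Longrightarrow> c \<in> hom C B (cod C c)"
  using ArD[OF is_cokernelD(2)] is_cokernelD(3) homD(3) by metis

lemma cok_zero: "is_cokernel C f c \<Longrightarrow> f \<in> hom C A B \<Longrightarrow> cmp C c f = zer C A (cod C c)"
  using is_cokernelD(4) homD(2) by metis

lemma cok_factor:
  assumes c: "is_cokernel C f c" and f: "f \<in> hom C A B" and t: "t \<in> hom C B T"
    and tf: "cmp C t f = zer C A T"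
  shows "\<exists>u\<in>hom C (cod C c) T. cmp C u c = t"
  using is_cokernelD(5)[OF c, of t] homD[OF t] homD[OF f] tf by auto

lemma cok_epi:
  assumes k: "is_cokernel C f k"
  shows "epi C k"
  unfolding epi_def
proof (intro conjI allI impI)
  show "k \<in> Ar C" using is_cokernelD(2)[OF k] .
  have f: "f \<in> hom C (dom C f) (cod C f)" using ArD[OF is_cokernelD(1)[OF k]] .
  have kh: "k \<in> hom C (cod C f) (cod C k)" using cok_hom[OF k f] .
  fix X u v assume u: "u \<in> hom C (cod C k) X" and v: "v \<in> hom C (cod C k) X"
    and eq: "cmp C u k = cmp C v k"
  define t where "t = cmp C u k"
  have t: "t \<in> hom C (cod C f) X" using comp[OF kh u] unfolding t_def .
  have "cmp C t f = cmp C u (cmp C k f)" unfolding t_def using assoc[OF f kh u] by simp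
  also have "\<dots> = zer C (dom C f) X"
    using cok_zero[OF k f] cmp_zer_r[OF u homD(4)[OF f]] by simp
  finally have ft: "cmp C t f = zer C (dom C f) (cod C t)" using homD(3)[OF t] by simp
  have ex: "\<exists>!w. w \<in> hom C (cod C k) (cod C t) \<and> cmp C w k = t"
    using is_cokernelD(5)[OF k homD(1)[OF t] homD(2)[OF t] ft] .
  have u_fac: "u \<in> hom C (cod C k) (cod C t) \<and> cmp C u k = t" using u homD(3)[OF t] t_def by simp
  have v_fac: "v \<in> hom C (cod C k) (cod C t) \<and> cmp C v k = t" using v eq homD(3)[OF t] t_def by simp
  show "u = v" by (rule ex1_unique[OF ex u_fac v_fac])
qed

text \<open>In an abelian category a morphism that is both mono and epi is an isomorphism:
  it is the kernel of some \<open>f\<close>, which must vanish, so the identity factors through it.\<close>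
lemma mono_epi_iso:
  assumes m: "m \<in> hom C A B" and mono: "mono C m" and epi: "epi C m"
  shows "iso C m"
proof -
  obtain f where k: "is_kernel C f m" using mono_is_kernel[OF mono] by blast
  have f: "f \<in> hom C B (cod C f)" using is_kernelD(1,3)[OF k] homD(3)[OF m] by (simp add: hom_def)
  have "f = zer C B (cod C f)"
    using epi_zero[OF epi m f] ker_zero[OF k f] homD(2)[OF m] by simp
  then have "cmp C f (idm C B) = zer C B (cod C f)" using idr[OF f] by simp
  then obtain u where u: "u \<in> hom C B A" and mu: "cmp C m u = idm C B"
    using ker_factor[OF k f id_hom[OF homD(5)[OF m]]] homD(2)[OF m] by auto
  have "cmp C m (cmp C u m) = cmp C m (idm C A)"
    using assoc[OF m u m] mu idl[OF m] idr[OF m] by simp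
  then have "cmp C u m = idm C A"
    using mono_cancel[OF mono] comp[OF m u] id_hom[OF homD(4)[OF m]] homD(2)[OF m] by auto
  then show ?thesis unfolding iso_def using u mu homD[OF m] by auto
qed

lemma iso_mono_epi:
  assumes iso: "iso C f"
  shows "mono C f" "epi C f"
proof -
  define A B where "A = dom C f" and "B = cod C f"
  have f: "f \<in> hom C A B" using iso ArD unfolding iso_def A_def B_def by blast
  obtain f' where f': "f' \<in> hom C B A" and f'f: "cmp C f' f = idm C A" and ff': "cmp C f f' = idm C B"
    using iso unfolding iso_def A_def B_def by blast
  show "mono C f"
  proof (rule mono_zeroI[OF f])
    fix Y y assume y: "y \<in> hom C Y A" and fy: "cmp C f y = zer C Y B"
    have "y = cmp C (cmp C f' f) y" using f'f idl[OF y] by simp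
    then show "y = zer C Y A" using assoc[OF y f f'] fy cmp_zer_r[OF f' homD(4)[OF y]] by simp
  qed
  show "epi C f"
  proof (rule epi_zeroI[OF f])
    fix Y u assume u: "u \<in> hom C B Y" and uf: "cmp C u f = zer C A Y"
    have "u = cmp C u (cmp C f f')" using ff' idr[OF u] by simp
    then show "u = zer C B Y" using assoc[OF f' f u] uf cmp_zer_l[OF f' homD(5)[OF u]] by simp
  qed
qed

section \<open>Zero object, biproducts and projectives\<close>

lemma zero_object:
  obtains Z where "projective C Z" "\<And>A u v. u \<in> hom C A Z \<Longrightarrow> v \<in> hom C A Z \<Longrightarrow> u = v"
proof -
  obtain Z where Z: "Z \<in> Ob C"
    and zero: "\<forall>A\<in>Ob C. hom C Z A = {zer C Z A} \<and> hom C A Z = {zer C A Z}"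
    using zero_axiom by blast
  have into_Z: "u = v" if u: "u \<in> hom C A Z" and v: "v \<in> hom C A Z" for A u v
  proof -
    have "hom C A Z = {zer C A Z}" using zero homD(4)[OF u] by blast
    then show ?thesis using u v by simp
  qed
  have "projective C Z"
    unfolding projective_def
  proof (intro conjI allI impI)
    fix e f assume e: "epi C e" and f: "f \<in> hom C Z (cod C e)"
    have eh: "e \<in> hom C (dom C e) (cod C e)" using e ArD unfolding epi_def by blast
    have g: "zer C Z (dom C e) \<in> hom C Z (dom C e)" using Z homD(4)[OF eh] by blast
    have "hom C Z (cod C e) = {zer C Z (cod C e)}" using zero homD(5)[OF eh] by blast
    then have "cmp C e (zer C Z (dom C e)) = f" using comp[OF g eh] f by simp
    then show "\<exists>g\<in>hom C Z (dom C e). cmp C e g = f" using g by blast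
  qed (rule Z)
  then show ?thesis using that into_Z by blast
qed

lemma biproduct:
  assumes A: "A \<in> Ob C" and B: "B \<in> Ob C"
  obtains P p1 p2 i1 i2 where "p1 \<in> hom C P A" "p2 \<in> hom C P B" "i1 \<in> hom C A P" "i2 \<in> hom C B P"
    "cmp C p1 i1 = idm C A" "cmp C p2 i1 = zer C A B" "cmp C p1 i2 = zer C B A" "cmp C p2 i2 = idm C B"
    "\<And>X f g. f \<in> hom C X A \<Longrightarrow> g \<in> hom C X B \<Longrightarrow> \<exists>u\<in>hom C X P. cmp C p1 u = f \<and> cmp C p2 u = g"
    "\<And>X u v. u \<in> hom C X P \<Longrightarrow> v \<in> hom C X P \<Longrightarrow> cmp C p1 u = cmp C p1 v \<Longrightarrow>
        cmp C p2 u = cmp C p2 v \<Longrightarrow> u = v"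
proof -
  obtain P p1 p2 where p1: "p1 \<in> hom C P A" and p2: "p2 \<in> hom C P B" and
    univ: "\<forall>X f g. f \<in> hom C X A \<longrightarrow> g \<in> hom C X B \<longrightarrow>
           (\<exists>!u. u \<in> hom C X P \<and> cmp C p1 u = f \<and> cmp C p2 u = g)"
    using product_axiom[rule_format, OF A B] by (elim exE conjE)
  have pair: "\<exists>u\<in>hom C X P. cmp C p1 u = f \<and> cmp C p2 u = g"
    if "f \<in> hom C X A" "g \<in> hom C X B" for X f g
    using ex1_implies_ex[OF univ[rule_format, OF that]] by (simp only: Bex_def)
  have ext: "u = v" if u: "u \<in> hom C X P" and v: "v \<in> hom C X P"
    and e1: "cmp C p1 u = cmp C p1 v" and e2: "cmp C p2 u = cmp C p2 v" for X u v
  proof -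
    have "\<exists>!w. w \<in> hom C X P \<and> cmp C p1 w = cmp C p1 u \<and> cmp C p2 w = cmp C p2 u"
      using univ[rule_format, OF comp[OF u p1] comp[OF u p2]] by simp
    then show ?thesis by (rule ex1_unique) (use u v e1 e2 in simp)+
  qed
  obtain i1 where i1: "i1 \<in> hom C A P" "cmp C p1 i1 = idm C A" "cmp C p2 i1 = zer C A B"
    using pair[OF id_hom[OF A] zer_hom[OF A B]] by blast
  obtain i2 where i2: "i2 \<in> hom C B P" "cmp C p1 i2 = zer C B A" "cmp C p2 i2 = idm C B"
    using pair[OF zer_hom[OF B A] id_hom[OF B]] by blast
  show ?thesis by (rule that[OF p1 p2 i1(1) i2(1) i1(2,3) i2(2,3) pair ext])
qed

lemma projective_lift:
  assumes P: "projective C P" and e: "epi C e" "e \<in> hom C A B" and f: "f \<in> hom C P B"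
  shows "\<exists>g\<in>hom C P A. cmp C e g = f"
  using P e f homD(2,3)[OF e(2)] unfolding projective_def by blast

lemma mono_by_projectives:
  assumes EP: "enough_projectives C" and m: "m \<in> hom C A B"
    and kills: "\<And>Q z. projective C Q \<Longrightarrow> z \<in> hom C Q A \<Longrightarrow> cmp C m z = zer C Q B \<Longrightarrow> z = zer C Q A"
  shows "mono C m"
proof (rule mono_zeroI[OF m])
  fix Y y assume y: "y \<in> hom C Y A" and my: "cmp C m y = zer C Y B"
  obtain Q \<pi> where Q: "projective C Q" and \<pi>: "\<pi> \<in> hom C Q Y" "epi C \<pi>"
    using EP homD(4)[OF y] unfolding enough_projectives_def by blast
  have "cmp C m (cmp C y \<pi>) = zer C Q B"
    using assoc[OF \<pi>(1) y m] my cmp_zer_l[OF \<pi>(1) homD(5)[OF m]] by simp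
  then have "cmp C y \<pi> = zer C Q A" using kills[OF Q comp[OF \<pi>(1) y]] by blast
  then show "y = zer C Y A" using epi_zero[OF \<pi>(2,1) y] by blast
qed

lemma epi_by_projectives:
  assumes EP: "enough_projectives C" and g: "g \<in> hom C A B"
    and lifts: "\<And>Q \<pi>. projective C Q \<Longrightarrow> \<pi> \<in> hom C Q B \<Longrightarrow> \<exists>r\<in>hom C Q A. cmp C g r = \<pi>"
  shows "epi C g"
proof -
  obtain Q \<pi> where Q: "projective C Q" and \<pi>: "\<pi> \<in> hom C Q B" "epi C \<pi>"
    using EP homD(5)[OF g] unfolding enough_projectives_def by blast
  obtain r where "r \<in> hom C Q A" "cmp C g r = \<pi>" using lifts[OF Q \<pi>(1)] by blast
  then show ?thesis using epi_left_factor[OF _ g] \<pi>(2) by blast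
qed

section \<open>Exactness at the target of a morphism, tested on projectives\<close>

lemma mono_comp:
  assumes m: "mono C m" "m \<in> hom C I A" and k: "mono C k" "k \<in> hom C K I"
  shows "mono C (cmp C m k)"
proof (rule mono_zeroI[OF comp[OF k(2) m(2)]])
  fix Y y assume y: "y \<in> hom C Y K" and mky: "cmp C (cmp C m k) y = zer C Y A"
  have "cmp C k y = zer C Y I" using mono_zero[OF m comp[OF y k(2)]] mky assoc[OF y k(2) m(2)] by simp
  then show "y = zer C Y K" using mono_zero[OF k y] by blast
qed

text \<open>The corestriction of \<open>a\<close> to its image \<open>Ker (Coker a)\<close> is epi.\<close>
lemma image_epi:
  assumes a: "a \<in> hom C A1 A0" and c: "is_cokernel C a c" and m: "is_kernel C c m"
    and e: "e \<in> hom C A1 (dom C m)" and me: "cmp C m e = a"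
  shows "epi C e"
proof -
  define I Q where "I = dom C m" and "Q = cod C c"
  have ch: "c \<in> hom C A0 Q" using cok_hom[OF c a] unfolding Q_def .
  have mh: "m \<in> hom C I A0" using ker_hom[OF m ch] unfolding I_def .
  have mm: "mono C m" using ker_mono[OF m] .
  show ?thesis
  proof (rule epi_zeroI[OF e[folded I_def]])
    fix Y u assume u: "u \<in> hom C I Y" and ue: "cmp C u e = zer C A1 Y"
    \<comment> \<open>\<open>a\<close> factors through the kernel \<open>k\<close> of \<open>u\<close>, so the cokernel of \<open>a\<close> kills the mono
        \<open>m k\<close>; hence \<open>m\<close> factors through \<open>m k\<close>, so \<open>k\<close> is split epi and \<open>u = 0\<close>.\<close>
    obtain k where k: "is_kernel C u k" using has_kernel homD(1)[OF u] by blast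
    define K where "K = dom C k"
    have kh: "k \<in> hom C K I" using ker_hom[OF k u] unfolding K_def .
    obtain e' where e'h: "e' \<in> hom C A1 K" and ke': "cmp C k e' = e"
      using ker_factor[OF k u e[folded I_def] ue] unfolding K_def by blast
    have mkh: "cmp C m k \<in> hom C K A0" using comp[OF kh mh] .
    obtain r where r: "is_kernel C r (cmp C m k)"
      using mono_is_kernel[OF mono_comp[OF mm mh ker_mono[OF k] kh]] by blast
    define R where "R = cod C r"
    have rh: "r \<in> hom C A0 R" using is_kernelD(1,3)[OF r] homD(3)[OF mkh] unfolding R_def
      by (simp add: hom_def)
    have rmk: "cmp C r (cmp C m k) = zer C K R" using ker_zero[OF r rh] homD(2)[OF mkh] by simp
    have "cmp C r a = cmp C (cmp C r (cmp C m k)) e'"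
      using me ke' assoc[OF e'h kh mh] assoc[OF e'h mkh rh] by simp
    then have "cmp C r a = zer C A1 R" using rmk cmp_zer_l[OF e'h homD(5)[OF rh]] by simp
    then obtain r' where r'h: "r' \<in> hom C Q R" and r'c: "cmp C r' c = r"
      using cok_factor[OF c a rh] unfolding Q_def by blast
    have "cmp C r m = cmp C r' (cmp C c m)" using r'c assoc[OF mh ch r'h] by simp
    then have "cmp C r m = zer C I R"
      using ker_zero[OF m ch] cmp_zer_r[OF r'h homD(4)[OF mh]] unfolding I_def by simp
    then obtain j where jh: "j \<in> hom C I K" and mkj: "cmp C (cmp C m k) j = m"
      using ker_factor[OF r rh mh] homD(2)[OF mkh] by auto
    have "cmp C m (cmp C k j) = cmp C m (idm C I)"
      using mkj assoc[OF jh kh mh] idr[OF mh] by simp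
    then have kj: "cmp C k j = idm C I"
      using mono_cancel[OF mm] comp[OF jh kh] id_hom[OF homD(4)[OF mh]] homD(2)[OF mh] by auto
    have "u = cmp C (cmp C u k) j" using kj idr[OF u] assoc[OF jh kh u] by simp
    then show "u = zer C I Y"
      using ker_zero[OF k u] cmp_zer_l[OF jh homD(5)[OF u]] unfolding K_def by simp
  qed
qed

text \<open>Exactness of \<open>A1 \<rightarrow> A0 \<rightarrow> Coker a\<close> at \<open>A0\<close>, seen from a projective \<open>P\<close>:
  a map \<open>P \<rightarrow> A0\<close> killed by the cokernel of \<open>a\<close> factors through \<open>a\<close>.\<close>
lemma lift_through_cokernel:
  assumes a: "a \<in> hom C A1 A0" and c: "is_cokernel C a c" and P: "projective C P"
    and z: "z \<in> hom C P A0" and cz: "cmp C c z = zer C P (cod C c)"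
  shows "\<exists>t\<in>hom C P A1. cmp C a t = z"
proof -
  have ch: "c \<in> hom C A0 (cod C c)" using cok_hom[OF c a] .
  obtain m where m: "is_kernel C c m" using has_kernel homD(1)[OF ch] by blast
  have mh: "m \<in> hom C (dom C m) A0" using ker_hom[OF m ch] .
  obtain e where eh: "e \<in> hom C A1 (dom C m)" and me: "cmp C m e = a"
    using ker_factor[OF m ch a cok_zero[OF c a]] by blast
  obtain u where uh: "u \<in> hom C P (dom C m)" and mu: "cmp C m u = z"
    using ker_factor[OF m ch z cz] by blast
  obtain t where th: "t \<in> hom C P A1" and et: "cmp C e t = u"
    using projective_lift[OF P image_epi[OF a c m eh me] eh uh] by blast
  have "cmp C a t = z" using me mu et assoc[OF th eh mh] by simp
  then show ?thesis using th by blast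
qed

section \<open>Morphisms and 2-arrows of \<open>A^[1]\<close> into an arrow with zero target\<close>

text \<open>For an arrow \<open>x : X \<rightarrow> Z\<close> into a zero object, a morphism \<open>d \<rightarrow> x\<close> is just an
  arbitrary map \<open>w\<close> on the sources, and every map \<open>\<alpha>\<close> with \<open>w - w' = \<alpha> d\<close> is a 2-arrow.
  These test objects suffice to detect full faithfulness.\<close>
lemma mor1_into_zero:
  assumes Z: "\<And>A u v. u \<in> hom C A Z \<Longrightarrow> v \<in> hom C A Z \<Longrightarrow> u = v"
    and d: "d \<in> hom C D1 D0" and x: "x \<in> hom C X Z" and w: "w \<in> hom C D1 X"
  shows "mor1 C d x (zer C D0 Z, w)"
proof -
  have z: "zer C D0 Z \<in> hom C D0 Z" using homD(5)[OF d] homD(5)[OF x] by blast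
  have "cmp C x w = cmp C (zer C D0 Z) d" by (rule Z[OF comp[OF w x] comp[OF d z]])
  then show ?thesis unfolding mor1_def using homD[OF d] homD[OF x] z w by simp
qed

lemma arr2_into_zero:
  assumes Z: "\<And>A u v. u \<in> hom C A Z \<Longrightarrow> v \<in> hom C A Z \<Longrightarrow> u = v"
    and d: "d \<in> hom C D1 D0" and x: "x \<in> hom C X Z"
    and u: "mor1 C d x (zer C D0 Z, w)" and v: "mor1 C d x (zer C D0 Z, w')"
    and \<alpha>: "\<alpha> \<in> hom C D0 X" and diff: "sub C w w' = cmp C \<alpha> d"
  shows "arr2 C d x (zer C D0 Z, w) (zer C D0 Z, w') \<alpha>"
proof -
  have z: "zer C D0 Z \<in> hom C D0 Z" using homD(5)[OF d] homD(5)[OF x] by blast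
  have "sub C (zer C D0 Z) (zer C D0 Z) = cmp C x \<alpha>" by (rule Z[OF sub_hom[OF z z] comp[OF \<alpha> x]])
  then show ?thesis unfolding arr2_def using u v \<alpha> diff homD(3)[OF d] homD(2)[OF x] by simp
qed

lemma zero_test_object:
  assumes Z: "projective C Z" and X: "X \<in> Ob C"
  shows "zer C X Z \<in> hom C X Z" "obj_c C (zer C X Z)"
proof -
  show x: "zer C X Z \<in> hom C X Z" using X Z unfolding projective_def by blast
  show "obj_c C (zer C X Z)" unfolding obj_c_def using homD(1,3)[OF x] Z by simp
qed

end

lemma fully_cofaithful_fullD:
  assumes "fully_cofaithful_c C a b f" "obj_c C x" "mor1 C b x u" "mor1 C b x v"
    "arr2 C a x (comp1 C u f) (comp1 C v f) \<beta>"
  shows "\<exists>\<alpha>. arr2 C b x u v \<alpha> \<and> cmp C \<alpha> (fst f) = \<beta>"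
  using assms unfolding fully_cofaithful_c_def by blast

lemma fully_cofaithful_faithfulD:
  assumes "fully_cofaithful_c C a b f" "obj_c C x" "mor1 C b x u" "mor1 C b x v"
    "arr2 C b x u v \<alpha>" "arr2 C b x u v \<alpha>'" "cmp C \<alpha> (fst f) = cmp C \<alpha>' (fst f)"
  shows "\<alpha> = \<alpha>'"
  using assms unfolding fully_cofaithful_c_def by blast

section \<open>Commutative squares: pushouts versus full cofaithfulness\<close>

locale comm_square = abelian_cat C for C :: "('o,'m) cat" +
  fixes A1 A0 B1 B0 :: 'o and a b f0 f1 :: 'm
  assumes a: "a \<in> hom C A1 A0" and b: "b \<in> hom C B1 B0"
    and f0: "f0 \<in> hom C A0 B0" and f1: "f1 \<in> hom C A1 B1"
    and comm: "cmp C b f1 = cmp C f0 a"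
begin

lemma objects: "A1 \<in> Ob C" "A0 \<in> Ob C" "B1 \<in> Ob C" "B0 \<in> Ob C"
  using homD[OF a] homD[OF b] by auto

text \<open>The two halves of the pushout property of the square.\<close>
definition jointly_epic :: bool where
  "jointly_epic \<longleftrightarrow> (\<forall>Y y y'. y \<in> hom C B0 Y \<longrightarrow> y' \<in> hom C B0 Y \<longrightarrow>
      cmp C y f0 = cmp C y' f0 \<longrightarrow> cmp C y b = cmp C y' b \<longrightarrow> y = y')"

definition weak_pushout :: bool where
  "weak_pushout \<longleftrightarrow> (\<forall>X \<beta> w. \<beta> \<in> hom C A0 X \<longrightarrow> w \<in> hom C B1 X \<longrightarrow>
      cmp C \<beta> a = cmp C w f1 \<longrightarrow> (\<exists>\<alpha>\<in>hom C B0 X. cmp C \<alpha> f0 = \<beta> \<and> cmp C \<alpha> b = w))"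

lemma jointly_epicI:
  assumes "\<And>Y y. y \<in> hom C B0 Y \<Longrightarrow> cmp C y f0 = zer C A0 Y \<Longrightarrow> cmp C y b = zer C B1 Y \<Longrightarrow>
      y = zer C B0 Y"
  shows jointly_epic
  unfolding jointly_epic_def
proof (intro allI impI)
  fix Y y y' assume y: "y \<in> hom C B0 Y" and y': "y' \<in> hom C B0 Y"
    and e0: "cmp C y f0 = cmp C y' f0" and e1: "cmp C y b = cmp C y' b"
  have "sub C y y' = zer C B0 Y"
  proof (rule assms)
    show "sub C y y' \<in> hom C B0 Y" using y y' by blast
    show "cmp C (sub C y y') f0 = zer C A0 Y"
      using cmp_sub_l[OF f0 y y'] e0 sub_self[OF comp[OF f0 y']] by simp
    show "cmp C (sub C y y') b = zer C B1 Y"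
      using cmp_sub_l[OF b y y'] e1 sub_self[OF comp[OF b y']] by simp
  qed
  then show "y = y'" using sub_zer_iff[OF y y'] by simp
qed

lemma jointly_epicD:
  assumes jointly_epic and y: "y \<in> hom C B0 Y"
    and "cmp C y f0 = zer C A0 Y" and "cmp C y b = zer C B1 Y"
  shows "y = zer C B0 Y"
proof -
  have Y: "Y \<in> Ob C" using homD(5)[OF y] .
  have "cmp C (zer C B0 Y) f0 = zer C A0 Y" "cmp C (zer C B0 Y) b = zer C B1 Y"
    using cmp_zer_l[OF f0 Y] cmp_zer_l[OF b Y] .
  then show ?thesis
    using assms zer_hom[OF objects(4) Y] unfolding jointly_epic_def by metis
qed

end

context comm_square
begin

text \<open>Faithfulness, tested on \<open>Y \<rightarrow> 0\<close>, says that \<open>(f0, b)\<close> is jointly epic.\<close>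
lemma jointly_epic_if_fully_cofaithful:
  assumes FC: "fully_cofaithful_c C a b (f0, f1)"
  shows jointly_epic
  unfolding jointly_epic_def
proof (intro allI impI)
  fix Y y y' assume y: "y \<in> hom C B0 Y" and y': "y' \<in> hom C B0 Y"
    and e0: "cmp C y f0 = cmp C y' f0" and e1: "cmp C y b = cmp C y' b"
  obtain Z where Z: "projective C Z" and into_Z: "\<And>A u v. u \<in> hom C A Z \<Longrightarrow> v \<in> hom C A Z \<Longrightarrow> u = v"
    using zero_object by metis
  note x = zero_test_object[OF Z homD(5)[OF y]]
  have yb: "cmp C y b \<in> hom C B1 Y" using comp[OF b y] .
  have mu: "mor1 C b (zer C Y Z) (zer C B0 Z, cmp C y b)"
    by (rule mor1_into_zero[OF into_Z b x(1) yb])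
  have mv: "mor1 C b (zer C Y Z) (zer C B0 Z, zer C B1 Y)"
    by (rule mor1_into_zero[OF into_Z b x(1) zer_hom[OF objects(3) homD(5)[OF y]]])
  have "arr2 C b (zer C Y Z) (zer C B0 Z, cmp C y b) (zer C B0 Z, zer C B1 Y) y"
    by (rule arr2_into_zero[OF into_Z b x(1) mu mv y sub_zer[OF yb]])
  moreover have "arr2 C b (zer C Y Z) (zer C B0 Z, cmp C y b) (zer C B0 Z, zer C B1 Y) y'"
    using arr2_into_zero[OF into_Z b x(1) mu mv y'] sub_zer[OF yb] e1 by simp
  ultimately show "y = y'"
    using fully_cofaithful_faithfulD[OF FC x(2) mu mv] e0 by simp
qed

text \<open>Fullness, tested on \<open>X \<rightarrow> 0\<close>, says that every cocone on \<open>(a, f1)\<close> extends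
  along \<open>(f0, b)\<close>.\<close>
lemma weak_pushout_if_fully_cofaithful:
  assumes FC: "fully_cofaithful_c C a b (f0, f1)"
  shows weak_pushout
  unfolding weak_pushout_def
proof (intro allI impI)
  fix X \<beta> w assume \<beta>: "\<beta> \<in> hom C A0 X" and w: "w \<in> hom C B1 X"
    and cocone: "cmp C \<beta> a = cmp C w f1"
  obtain Z where Z: "projective C Z" and into_Z: "\<And>A u v. u \<in> hom C A Z \<Longrightarrow> v \<in> hom C A Z \<Longrightarrow> u = v"
    using zero_object by metis
  note x = zero_test_object[OF Z homD(5)[OF w]]
  have X: "X \<in> Ob C" and ZO: "Z \<in> Ob C" using homD(5)[OF w] homD(5)[OF x(1)] .
  have wf1: "cmp C w f1 \<in> hom C A1 X" using comp[OF f1 w] .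
  have zw: "zer C B1 X \<in> hom C B1 X" using objects(3) X by blast
  have mu: "mor1 C b (zer C X Z) (zer C B0 Z, w)" by (rule mor1_into_zero[OF into_Z b x(1) w])
  have mv: "mor1 C b (zer C X Z) (zer C B0 Z, zer C B1 X)"
    by (rule mor1_into_zero[OF into_Z b x(1) zw])
  have comp_u: "comp1 C (zer C B0 Z, w) (f0, f1) = (zer C A0 Z, cmp C w f1)"
    and comp_v: "comp1 C (zer C B0 Z, zer C B1 X) (f0, f1) = (zer C A0 Z, zer C A1 X)"
    unfolding comp1_def using cmp_zer_l[OF f0 ZO] cmp_zer_l[OF f1 X] by simp_all
  have "arr2 C a (zer C X Z) (zer C A0 Z, cmp C w f1) (zer C A0 Z, zer C A1 X) \<beta>"
  proof (rule arr2_into_zero[OF into_Z a x(1) _ _ \<beta>])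
    show "mor1 C a (zer C X Z) (zer C A0 Z, cmp C w f1)" by (rule mor1_into_zero[OF into_Z a x(1) wf1])
    show "mor1 C a (zer C X Z) (zer C A0 Z, zer C A1 X)"
      by (rule mor1_into_zero[OF into_Z a x(1) zer_hom[OF objects(1) X]])
    show "sub C (cmp C w f1) (zer C A1 X) = cmp C \<beta> a" using sub_zer[OF wf1] cocone by simp
  qed
  then obtain \<alpha> where \<alpha>: "arr2 C b (zer C X Z) (zer C B0 Z, w) (zer C B0 Z, zer C B1 X) \<alpha>"
    and \<alpha>f0: "cmp C \<alpha> f0 = \<beta>"
    using fully_cofaithful_fullD[OF FC x(2) mu mv] comp_u comp_v by auto
  have "\<alpha> \<in> hom C B0 X" and "cmp C \<alpha> b = w"
    using \<alpha> sub_zer[OF w] homD(3)[OF b] homD(2)[OF x(1)] unfolding arr2_def by simp_all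
  then show "\<exists>\<alpha>\<in>hom C B0 X. cmp C \<alpha> f0 = \<beta> \<and> cmp C \<alpha> b = w" using \<alpha>f0 by blast
qed

text \<open>Conversely, uniqueness of extensions gives faithfulness on arbitrary test objects \<open>x\<close>.\<close>
lemma faithful_if_jointly_epic:
  assumes JE: jointly_epic and \<alpha>: "arr2 C b x u v \<alpha>" and \<alpha>': "arr2 C b x u v \<alpha>'"
    and eq: "cmp C \<alpha> f0 = cmp C \<alpha>' f0"
  shows "\<alpha> = \<alpha>'"
proof -
  have "\<alpha> \<in> hom C B0 (dom C x)" "\<alpha>' \<in> hom C B0 (dom C x)" "cmp C \<alpha> b = cmp C \<alpha>' b"
    using \<alpha> \<alpha>' homD(3)[OF b] unfolding arr2_def by auto
  then show ?thesis using JE eq unfolding jointly_epic_def by blast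
qed

text \<open>\<dots> and existence of extensions gives fullness: the extension \<open>\<alpha>\<close> of the cocone
  \<open>(\<beta>, u1 - v1)\<close> is a 2-arrow \<open>u \<Rightarrow> v\<close> because \<open>x \<alpha>\<close> and \<open>u0 - v0\<close> agree on \<open>f0\<close> and \<open>b\<close>.\<close>
lemma full_if_pushout:
  assumes JE: jointly_epic and WP: weak_pushout
    and u: "mor1 C b x u" and v: "mor1 C b x v"
    and \<beta>: "arr2 C a x (comp1 C u (f0, f1)) (comp1 C v (f0, f1)) \<beta>"
  shows "\<exists>\<alpha>. arr2 C b x u v \<alpha> \<and> cmp C \<alpha> f0 = \<beta>"
proof -
  define X1 X0 where "X1 = dom C x" and "X0 = cod C x"
  have x: "x \<in> hom C X1 X0" using u ArD unfolding mor1_def X1_def X0_def by blast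
  have u0: "fst u \<in> hom C B0 X0" and u1: "snd u \<in> hom C B1 X1"
    and uc: "cmp C x (snd u) = cmp C (fst u) b"
    using u homD(2,3)[OF b] unfolding mor1_def X0_def X1_def by auto
  have v0: "fst v \<in> hom C B0 X0" and v1: "snd v \<in> hom C B1 X1"
    and vc: "cmp C x (snd v) = cmp C (fst v) b"
    using v homD(2,3)[OF b] unfolding mor1_def X0_def X1_def by auto
  have \<beta>h: "\<beta> \<in> hom C A0 X1"
    and \<beta>1: "sub C (cmp C (snd u) f1) (cmp C (snd v) f1) = cmp C \<beta> a"
    and \<beta>0: "sub C (cmp C (fst u) f0) (cmp C (fst v) f0) = cmp C x \<beta>"
    using \<beta> homD(3)[OF a] unfolding arr2_def comp1_def X1_def by auto
  define w0 w1 where "w0 = sub C (fst u) (fst v)" and "w1 = sub C (snd u) (snd v)"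
  have w0: "w0 \<in> hom C B0 X0" and w1: "w1 \<in> hom C B1 X1"
    unfolding w0_def w1_def using u0 v0 u1 v1 by blast+
  have "cmp C \<beta> a = cmp C w1 f1" unfolding w1_def using cmp_sub_l[OF f1 u1 v1] \<beta>1 by simp
  then obtain \<alpha> where \<alpha>: "\<alpha> \<in> hom C B0 X1" and \<alpha>f0: "cmp C \<alpha> f0 = \<beta>" and \<alpha>b: "cmp C \<alpha> b = w1"
    using WP \<beta>h w1 unfolding weak_pushout_def by blast
  have "cmp C (cmp C x \<alpha>) f0 = cmp C w0 f0"
    using assoc[OF f0 \<alpha> x] \<alpha>f0 \<beta>0 cmp_sub_l[OF f0 u0 v0] unfolding w0_def by simp
  moreover have "cmp C (cmp C x \<alpha>) b = cmp C w0 b"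
    using assoc[OF b \<alpha> x] \<alpha>b cmp_sub_r[OF u1 v1 x] cmp_sub_l[OF b u0 v0] uc vc
    unfolding w0_def w1_def by simp
  ultimately have "cmp C x \<alpha> = w0"
    using JE comp[OF \<alpha> x] w0 unfolding jointly_epic_def by blast
  then have "arr2 C b x u v \<alpha>"
    unfolding arr2_def using u v \<alpha> \<alpha>b homD(3)[OF b] X1_def w0_def w1_def by simp
  then show ?thesis using \<alpha>f0 by blast
qed

theorem fully_cofaithful_iff_pushout:
  "fully_cofaithful_c C a b (f0, f1) \<longleftrightarrow> jointly_epic \<and> weak_pushout"
proof
  assume "fully_cofaithful_c C a b (f0, f1)"
  then show "jointly_epic \<and> weak_pushout"
    using jointly_epic_if_fully_cofaithful weak_pushout_if_fully_cofaithful by blast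
next
  assume "jointly_epic \<and> weak_pushout"
  then show "fully_cofaithful_c C a b (f0, f1)"
    unfolding fully_cofaithful_c_def using full_if_pushout faithful_if_jointly_epic by simp
qed

end

section \<open>The induced maps on cokernels and kernels\<close>

locale cokernel_square = comm_square +
  fixes ca cb h
  assumes ca: "is_cokernel C a ca" and cb: "is_cokernel C b cb"
    and h: "h \<in> hom C (cod C ca) (cod C cb)" and h_comm: "cmp C h ca = cmp C cb f0"
begin

lemma ca_hom: "ca \<in> hom C A0 (cod C ca)" using cok_hom[OF ca a] .
lemma cb_hom: "cb \<in> hom C B0 (cod C cb)" using cok_hom[OF cb b] .

text \<open>\<open>(f0, b)\<close> is jointly epic exactly when \<open>h\<close> is epi: a map out of \<open>B0\<close> killing \<open>b\<close>
  factors through \<open>cb\<close>, and it kills \<open>f0\<close> iff the factor kills \<open>h\<close>.\<close>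
lemma jointly_epic_iff_epi_coker: "jointly_epic \<longleftrightarrow> epi C h"
proof
  assume JE: jointly_epic
  show "epi C h"
  proof (rule epi_zeroI[OF h])
    fix Y \<psi> assume \<psi>: "\<psi> \<in> hom C (cod C cb) Y" and \<psi>h: "cmp C \<psi> h = zer C (cod C ca) Y"
    have Y: "Y \<in> Ob C" using homD(5)[OF \<psi>] .
    have \<delta>: "cmp C \<psi> cb \<in> hom C B0 Y" using comp[OF cb_hom \<psi>] .
    have "cmp C (cmp C \<psi> cb) f0 = cmp C (cmp C \<psi> h) ca"
      using assoc[OF f0 cb_hom \<psi>] assoc[OF ca_hom h \<psi>] h_comm by simp
    then have "cmp C (cmp C \<psi> cb) f0 = zer C A0 Y" using \<psi>h cmp_zer_l[OF ca_hom Y] by simp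
    moreover have "cmp C (cmp C \<psi> cb) b = zer C B1 Y"
      using assoc[OF b cb_hom \<psi>] cok_zero[OF cb b] cmp_zer_r[OF \<psi> objects(3)] by simp
    ultimately have "cmp C \<psi> cb = zer C B0 Y" using jointly_epicD[OF JE \<delta>] by blast
    then show "\<psi> = zer C (cod C cb) Y" using epi_zero[OF cok_epi[OF cb] cb_hom \<psi>] by blast
  qed
next
  assume h_epi: "epi C h"
  show jointly_epic
  proof (rule jointly_epicI)
    fix Y y assume y: "y \<in> hom C B0 Y" and yf0: "cmp C y f0 = zer C A0 Y"
      and yb: "cmp C y b = zer C B1 Y"
    have Y: "Y \<in> Ob C" using homD(5)[OF y] .
    obtain \<phi> where \<phi>: "\<phi> \<in> hom C (cod C cb) Y" and \<phi>cb: "cmp C \<phi> cb = y"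
      using cok_factor[OF cb b y yb] by blast
    have "cmp C (cmp C \<phi> h) ca = zer C A0 Y"
      using assoc[OF ca_hom h \<phi>] h_comm assoc[OF f0 cb_hom \<phi>] \<phi>cb yf0 by simp
    then have "cmp C \<phi> h = zer C (cod C ca) Y"
      using epi_zero[OF cok_epi[OF ca] ca_hom comp[OF h \<phi>]] by blast
    then have "\<phi> = zer C (cod C cb) Y" using epi_zero[OF h_epi h \<phi>] by blast
    then show "y = zer C B0 Y" using \<phi>cb cmp_zer_l[OF cb_hom Y] by simp
  qed
qed

text \<open>Extending the cocone \<open>(ca, 0)\<close> along \<open>(f0, b)\<close> gives a left inverse of \<open>h\<close>.\<close>
lemma coker_retraction_if_weak_pushout:
  assumes WP: weak_pushout
  shows "\<exists>\<phi>\<in>hom C (cod C cb) (cod C ca). cmp C \<phi> h = idm C (cod C ca)"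
proof -
  define Qa where "Qa = cod C ca"
  have Qa: "Qa \<in> Ob C" using homD(5)[OF ca_hom] unfolding Qa_def .
  have z: "zer C B1 Qa \<in> hom C B1 Qa" using objects(3) Qa by blast
  have "cmp C ca a = cmp C (zer C B1 Qa) f1"
    using cok_zero[OF ca a] cmp_zer_l[OF f1 Qa] unfolding Qa_def by simp
  then obtain \<alpha> where \<alpha>: "\<alpha> \<in> hom C B0 Qa" and \<alpha>f0: "cmp C \<alpha> f0 = ca"
    and \<alpha>b: "cmp C \<alpha> b = zer C B1 Qa"
    using WP ca_hom z unfolding weak_pushout_def Qa_def by blast
  obtain \<phi> where \<phi>: "\<phi> \<in> hom C (cod C cb) Qa" and \<phi>cb: "cmp C \<phi> cb = \<alpha>"
    using cok_factor[OF cb b \<alpha> \<alpha>b] by blast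
  have "cmp C (cmp C \<phi> h) ca = cmp C (idm C Qa) ca"
    using assoc[OF ca_hom h \<phi>] h_comm assoc[OF f0 cb_hom \<phi>] \<phi>cb \<alpha>f0 idl[OF ca_hom]
    unfolding Qa_def by simp
  then have "cmp C \<phi> h = idm C Qa"
    using epi_cancel[OF cok_epi[OF ca]] comp[OF h \<phi>] id_hom[OF Qa] unfolding Qa_def by auto
  then show ?thesis using \<phi> unfolding Qa_def by blast
qed

lemma coker_iso_if_pushout:
  assumes jointly_epic and weak_pushout
  shows "iso C h"
proof (rule mono_epi_iso[OF h])
  obtain \<phi> where \<phi>: "\<phi> \<in> hom C (cod C cb) (cod C ca)" and \<phi>h: "cmp C \<phi> h = idm C (cod C ca)"
    using coker_retraction_if_weak_pushout[OF assms(2)] by blast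
  show "mono C h"
  proof (rule mono_zeroI[OF h])
    fix Y y assume y: "y \<in> hom C Y (cod C ca)" and hy: "cmp C h y = zer C Y (cod C cb)"
    have "y = cmp C (cmp C \<phi> h) y" using \<phi>h idl[OF y] by simp
    also have "\<dots> = zer C Y (cod C ca)"
      using assoc[OF y h \<phi>] hy cmp_zer_r[OF \<phi> homD(4)[OF y]] by simp
    finally show "y = zer C Y (cod C ca)" .
  qed
  show "epi C h" using assms(1) jointly_epic_iff_epi_coker by blast
qed

end

locale kernel_square = comm_square +
  fixes ka kb g
  assumes ka: "is_kernel C a ka" and kb: "is_kernel C b kb"
    and g: "g \<in> hom C (dom C ka) (dom C kb)" and g_comm: "cmp C kb g = cmp C f1 ka"
begin

lemma ka_hom: "ka \<in> hom C (dom C ka) A1" using ker_hom[OF ka a] .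
lemma kb_hom: "kb \<in> hom C (dom C kb) B1" using ker_hom[OF kb b] .

end

locale induced_square = cokernel_square + kernel_square

section \<open>The pushout presented as a cokernel\<close>

text \<open>The pushout of \<open>a\<close> and \<open>f1\<close> is the cokernel \<open>c : A0 \<oplus> B1 \<rightarrow> E\<close> of
  \<open>\<tau> = (a, f1) : A1 \<rightarrow> A0 \<oplus> B1\<close>; the square induces \<open>\<sigma> = [f0, -b] : A0 \<oplus> B1 \<rightarrow> B0\<close>.\<close>
locale presented_square = comm_square +
  fixes P p1 p2 i1 i2 \<tau> c E
  assumes p1: "p1 \<in> hom C P A0" and p2: "p2 \<in> hom C P B1"
    and i1: "i1 \<in> hom C A0 P" and i2: "i2 \<in> hom C B1 P"
    and p1_i1: "cmp C p1 i1 = idm C A0" and p2_i1: "cmp C p2 i1 = zer C A0 B1"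
    and p1_i2: "cmp C p1 i2 = zer C B1 A0" and p2_i2: "cmp C p2 i2 = idm C B1"
    and biproduct_ext: "\<And>X u v. u \<in> hom C X P \<Longrightarrow> v \<in> hom C X P \<Longrightarrow>
      cmp C p1 u = cmp C p1 v \<Longrightarrow> cmp C p2 u = cmp C p2 v \<Longrightarrow> u = v"
    and tau: "\<tau> \<in> hom C A1 P" and p1_tau: "cmp C p1 \<tau> = a" and p2_tau: "cmp C p2 \<tau> = f1"
    and c: "is_cokernel C \<tau> c" and E_def: "E = cod C c"

lemma (in comm_square) presentation_exists:
  obtains P p1 p2 i1 i2 \<tau> c E where "presented_square C A1 A0 B1 B0 a b f0 f1 P p1 p2 i1 i2 \<tau> c E"
proof (rule biproduct[OF objects(2,3)])
  fix P p1 p2 i1 i2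
  assume bp: "p1 \<in> hom C P A0" "p2 \<in> hom C P B1" "i1 \<in> hom C A0 P" "i2 \<in> hom C B1 P"
    "cmp C p1 i1 = idm C A0" "cmp C p2 i1 = zer C A0 B1" "cmp C p1 i2 = zer C B1 A0" "cmp C p2 i2 = idm C B1"
    and pair: "\<And>X f g. f \<in> hom C X A0 \<Longrightarrow> g \<in> hom C X B1 \<Longrightarrow> \<exists>u\<in>hom C X P. cmp C p1 u = f \<and> cmp C p2 u = g"
    and ext: "\<And>X u v. u \<in> hom C X P \<Longrightarrow> v \<in> hom C X P \<Longrightarrow> cmp C p1 u = cmp C p1 v \<Longrightarrow>
        cmp C p2 u = cmp C p2 v \<Longrightarrow> u = v"
  obtain \<tau> where \<tau>: "\<tau> \<in> hom C A1 P" "cmp C p1 \<tau> = a" "cmp C p2 \<tau> = f1"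
    using pair[OF a f1] by blast
  obtain c where c: "is_cokernel C \<tau> c" using has_cokernel homD(1)[OF \<tau>(1)] by blast
  have "presented_square C A1 A0 B1 B0 a b f0 f1 P p1 p2 i1 i2 \<tau> c (cod C c)"
    by (unfold_locales; (rule bp \<tau> c refl ext)?; assumption)
  then show ?thesis by (rule that)
qed

context presented_square
begin

lemma c_hom: "c \<in> hom C P E" using cok_hom[OF c tau] unfolding E_def .
lemma c_tau: "cmp C c \<tau> = zer C A1 E" using cok_zero[OF c tau] unfolding E_def .
lemma E_ob: "E \<in> Ob C" using homD(5)[OF c_hom] .

lemma tau_decomp: "\<tau> = add C (cmp C i1 a) (cmp C i2 f1)"
proof (rule biproduct_ext[OF tau add_hom[OF comp[OF a i1] comp[OF f1 i2]]])
  show "cmp C p1 \<tau> = cmp C p1 (add C (cmp C i1 a) (cmp C i2 f1))"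
    using cmp_add_r[OF comp[OF a i1] comp[OF f1 i2] p1] assoc[OF a i1 p1] assoc[OF f1 i2 p1]
      p1_i1 p1_i2 idl[OF a] cmp_zer_l[OF f1 objects(2)] add_zer[OF a] p1_tau by simp
  show "cmp C p2 \<tau> = cmp C p2 (add C (cmp C i1 a) (cmp C i2 f1))"
    using cmp_add_r[OF comp[OF a i1] comp[OF f1 i2] p2] assoc[OF a i1 p2] assoc[OF f1 i2 p2]
      p2_i1 p2_i2 idl[OF f1] cmp_zer_l[OF a objects(3)] zer_add[OF f1] p2_tau by simp
qed

definition sigma where "sigma = sub C (cmp C f0 p1) (cmp C b p2)"

lemma sigma_hom: "sigma \<in> hom C P B0"
  unfolding sigma_def using comp[OF p1 f0] comp[OF p2 b] by blast

lemma sigma_components: "cmp C sigma i1 = f0" "cmp C sigma i2 = neg C b"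
proof -
  have "cmp C sigma i1 = sub C (cmp C f0 (cmp C p1 i1)) (cmp C b (cmp C p2 i1))"
    unfolding sigma_def using cmp_sub_l[OF i1 comp[OF p1 f0] comp[OF p2 b]]
      assoc[OF i1 p1 f0] assoc[OF i1 p2 b] by simp
  then show "cmp C sigma i1 = f0"
    using p1_i1 p2_i1 idr[OF f0] cmp_zer_r[OF b objects(2)] sub_zer[OF f0] by simp
  have "cmp C sigma i2 = sub C (cmp C f0 (cmp C p1 i2)) (cmp C b (cmp C p2 i2))"
    unfolding sigma_def using cmp_sub_l[OF i2 comp[OF p1 f0] comp[OF p2 b]]
      assoc[OF i2 p1 f0] assoc[OF i2 p2 b] by simp
  then show "cmp C sigma i2 = neg C b"
    using p1_i2 p2_i2 idr[OF b] cmp_zer_r[OF f0 objects(3)] zer_sub[OF b] by simp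
qed

text \<open>\<open>\<sigma> \<tau> = f0 a - b f1 = 0\<close>, so \<open>\<sigma>\<close> factors through the pushout \<open>E\<close>.\<close>
lemma sigma_tau: "cmp C sigma \<tau> = zer C A1 B0"
  using cmp_sub_l[OF tau comp[OF p1 f0] comp[OF p2 b]] assoc[OF tau p1 f0] assoc[OF tau p2 b]
    p1_tau p2_tau comm sub_self[OF comp[OF a f0]] unfolding sigma_def by simp

lemma sigma_epi_if_jointly_epic:
  assumes JE: jointly_epic
  shows "epi C sigma"
proof (rule epi_zeroI[OF sigma_hom])
  fix Y y assume y: "y \<in> hom C B0 Y" and y\<sigma>: "cmp C y sigma = zer C P Y"
  have Y: "Y \<in> Ob C" using homD(5)[OF y] .
  have "cmp C y f0 = zer C A0 Y"
    using assoc[OF i1 sigma_hom y] y\<sigma> sigma_components(1) cmp_zer_l[OF i1 Y] by simp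
  moreover have "neg C (cmp C y b) = zer C B1 Y"
    using assoc[OF i2 sigma_hom y] y\<sigma> sigma_components(2) cmp_zer_l[OF i2 Y] cmp_neg_r[OF b y]
    by simp
  then have "cmp C y b = zer C B1 Y"
    using neg_neg[OF comp[OF b y]] neg_zer[OF objects(3) Y] by metis
  ultimately show "y = zer C B0 Y" using jointly_epicD[OF JE y] by blast
qed

text \<open>If the induced map \<open>s : E \<rightarrow> B0\<close> is an isomorphism, every cocone \<open>(\<beta>, w)\<close> on
  \<open>(a, f1)\<close> extends along \<open>(f0, b)\<close>: the map \<open>[\<beta>, -w]\<close> kills \<open>\<tau>\<close>, so it factors as
  \<open>t c\<close>, and \<open>\<alpha> = t s\<inverse>\<close> is the extension.\<close>
lemma weak_pushout_if_induced_iso: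
  assumes s: "s \<in> hom C E B0" and sc: "cmp C s c = sigma" and iso: "iso C s"
  shows weak_pushout
  unfolding weak_pushout_def
proof (intro allI impI)
  fix X \<beta> w assume \<beta>: "\<beta> \<in> hom C A0 X" and w: "w \<in> hom C B1 X"
    and cocone: "cmp C \<beta> a = cmp C w f1"
  obtain s' where s': "s' \<in> hom C B0 E" and s's: "cmp C s' s = idm C E"
    using iso homD(2,3)[OF s] unfolding iso_def by auto
  define t where "t = sub C (cmp C \<beta> p1) (cmp C w p2)"
  have t: "t \<in> hom C P X" unfolding t_def using comp[OF p1 \<beta>] comp[OF p2 w] by blast
  have "cmp C t \<tau> = sub C (cmp C \<beta> a) (cmp C w f1)"
    unfolding t_def using cmp_sub_l[OF tau comp[OF p1 \<beta>] comp[OF p2 w]]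
      assoc[OF tau p1 \<beta>] assoc[OF tau p2 w] p1_tau p2_tau by simp
  then have "cmp C t \<tau> = zer C A1 X" using cocone sub_self[OF comp[OF f1 w]] by simp
  then obtain t' where t': "t' \<in> hom C E X" and t'c: "cmp C t' c = t"
    using cok_factor[OF c tau t] unfolding E_def by blast
  define \<alpha> where "\<alpha> = cmp C t' s'"
  have \<alpha>: "\<alpha> \<in> hom C B0 X" unfolding \<alpha>_def using comp[OF s' t'] .
  have "cmp C \<alpha> sigma = cmp C t' (cmp C (cmp C s' s) c)"
    unfolding \<alpha>_def sc[symmetric]
    using assoc[OF comp[OF c_hom s] s' t'] assoc[OF c_hom s s'] by simp
  then have \<alpha>\<sigma>: "cmp C \<alpha> sigma = t" using s's idl[OF c_hom] t'c by simp
  have "cmp C \<alpha> f0 = cmp C t i1" using sigma_components(1) assoc[OF i1 sigma_hom \<alpha>] \<alpha>\<sigma> by simp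
  also have "\<dots> = \<beta>"
    unfolding t_def using cmp_sub_l[OF i1 comp[OF p1 \<beta>] comp[OF p2 w]] assoc[OF i1 p1 \<beta>]
      assoc[OF i1 p2 w] p1_i1 p2_i1 idr[OF \<beta>] cmp_zer_r[OF w objects(2)] sub_zer[OF \<beta>] by simp
  finally have \<alpha>f0: "cmp C \<alpha> f0 = \<beta>" .
  have "neg C (cmp C \<alpha> b) = cmp C t i2"
    using sigma_components(2) assoc[OF i2 sigma_hom \<alpha>] \<alpha>\<sigma> cmp_neg_r[OF b \<alpha>] by simp
  also have "\<dots> = neg C w"
    unfolding t_def using cmp_sub_l[OF i2 comp[OF p1 \<beta>] comp[OF p2 w]] assoc[OF i2 p1 \<beta>]
      assoc[OF i2 p2 w] p1_i2 p2_i2 idr[OF w] cmp_zer_r[OF \<beta> objects(3)] zer_sub[OF w] by simp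
  finally have "cmp C \<alpha> b = w" using neg_neg[OF comp[OF b \<alpha>]] neg_neg[OF w] by metis
  then show "\<exists>\<alpha>\<in>hom C B0 X. cmp C \<alpha> f0 = \<beta> \<and> cmp C \<alpha> b = w" using \<alpha> \<alpha>f0 by blast
qed

text \<open>Conversely, extending the universal cocone \<open>(-c i1, c i2)\<close> of the pushout along
  \<open>(f0, b)\<close> shows that \<open>c i2\<close> kills the kernel of \<open>b\<close>.\<close>
lemma weak_pushout_kills_kernel:
  assumes WP: weak_pushout and kb: "is_kernel C b kb"
  shows "cmp C c (cmp C i2 kb) = zer C (dom C kb) E"
proof -
  have ci1: "cmp C c i1 \<in> hom C A0 E" and ci2: "cmp C c i2 \<in> hom C B1 E"
    using comp[OF i1 c_hom] comp[OF i2 c_hom] .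
  have "add C (cmp C (cmp C c i1) a) (cmp C (cmp C c i2) f1) = zer C A1 E"
    using c_tau tau_decomp cmp_add_r[OF comp[OF a i1] comp[OF f1 i2] c_hom]
      assoc[OF a i1 c_hom] assoc[OF f1 i2 c_hom] by simp
  then have "cmp C (cmp C c i2) f1 = neg C (cmp C (cmp C c i1) a)"
    using neg_unique[OF comp[OF a ci1] comp[OF f1 ci2]] by blast
  then have "cmp C (neg C (cmp C c i1)) a = cmp C (cmp C c i2) f1"
    using cmp_neg_l[OF a ci1] by simp
  then obtain \<alpha> where \<alpha>: "\<alpha> \<in> hom C B0 E" and \<alpha>b: "cmp C \<alpha> b = cmp C c i2"
    using WP neg_hom[OF ci1] ci2 unfolding weak_pushout_def by blast
  have kbh: "kb \<in> hom C (dom C kb) B1" using ker_hom[OF kb b] .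
  have "cmp C c (cmp C i2 kb) = cmp C \<alpha> (cmp C b kb)"
    using assoc[OF kbh i2 c_hom] assoc[OF kbh b \<alpha>] \<alpha>b by simp
  then show ?thesis using ker_zero[OF kb b] cmp_zer_r[OF \<alpha> homD(4)[OF kbh]] by simp
qed

end

section \<open>Diagram chases with projective probes\<close>

locale presented_induced = presented_square + induced_square
begin

text \<open>If \<open>c i2\<close> kills \<open>Ker b\<close>, then \<open>g\<close> is epi: a probe \<open>\<pi> : Q \<rightarrow> Ker b\<close> gives
  \<open>i2 kb \<pi>\<close> killed by the cokernel \<open>c\<close> of \<open>\<tau>\<close>, hence of the form \<open>\<tau> t\<close>; then \<open>a t = 0\<close>,
  so \<open>t = ka r\<close>, and \<open>kb g r = f1 t = kb \<pi>\<close> gives \<open>g r = \<pi>\<close>.\<close>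
lemma kernel_map_epi_if_killed:
  assumes EP: "enough_projectives C" and killed: "cmp C c (cmp C i2 kb) = zer C (dom C kb) E"
  shows "epi C g"
proof (rule epi_by_projectives[OF EP g])
  fix Q \<pi> assume Q: "projective C Q" and \<pi>: "\<pi> \<in> hom C Q (dom C kb)"
  have kb\<pi>: "cmp C kb \<pi> \<in> hom C Q B1" using comp[OF \<pi> kb_hom] .
  have z: "cmp C i2 (cmp C kb \<pi>) \<in> hom C Q P" using comp[OF kb\<pi> i2] .
  have "cmp C c (cmp C i2 (cmp C kb \<pi>)) = zer C Q (cod C c)"
    using assoc[OF kb\<pi> i2 c_hom] assoc[OF \<pi> kb_hom comp[OF i2 c_hom]] assoc[OF kb_hom i2 c_hom]
      killed cmp_zer_l[OF \<pi> E_ob] E_def by simp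
  then obtain t where t: "t \<in> hom C Q A1" and \<tau>t: "cmp C \<tau> t = cmp C i2 (cmp C kb \<pi>)"
    using lift_through_cokernel[OF tau c Q z] by blast
  have f1t: "cmp C f1 t = cmp C kb \<pi>"
    using assoc[OF t tau p2] p2_tau \<tau>t assoc[OF kb\<pi> i2 p2] p2_i2 idl[OF kb\<pi>] by simp
  have "cmp C a t = cmp C (cmp C p1 i2) (cmp C kb \<pi>)"
    using assoc[OF t tau p1] p1_tau \<tau>t assoc[OF kb\<pi> i2 p1] by simp
  then have "cmp C a t = zer C Q A0" using p1_i2 cmp_zer_l[OF kb\<pi> objects(2)] by simp
  then obtain r where r: "r \<in> hom C Q (dom C ka)" and kar: "cmp C ka r = t"
    using ker_factor[OF ka a t] by blast
  have "cmp C kb (cmp C g r) = cmp C kb \<pi>"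
    using assoc[OF r g kb_hom] g_comm assoc[OF r ka_hom f1] kar f1t by simp
  then have "cmp C g r = \<pi>"
    using mono_cancel[OF ker_mono[OF kb]] comp[OF r g] \<pi> by blast
  then show "\<exists>r\<in>hom C Q (dom C ka). cmp C g r = \<pi>" using r by blast
qed

text \<open>A map \<open>t\<close> lifting the first component of \<open>z : Q \<rightarrow> A0 \<oplus> B1\<close> along \<open>a\<close> can be
  corrected by an element \<open>ka r\<close> of \<open>Ker a\<close> to a lift of \<open>z\<close> along \<open>\<tau>\<close>, provided \<open>g r\<close>
  accounts for the defect \<open>z2 - f1 t\<close> in \<open>Ker b\<close>.\<close>
lemma tau_lift_by_correction:
  assumes z: "z \<in> hom C Q P" and t: "t \<in> hom C Q A1" and at: "cmp C a t = cmp C p1 z"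
    and r: "r \<in> hom C Q (dom C ka)"
    and defect: "cmp C kb (cmp C g r) = sub C (cmp C p2 z) (cmp C f1 t)"
  shows "cmp C \<tau> (add C t (cmp C ka r)) = z"
proof (rule biproduct_ext[OF comp[OF add_hom[OF t comp[OF r ka_hom]] tau] z])
  have kar: "cmp C ka r \<in> hom C Q A1" using comp[OF r ka_hom] .
  have t': "add C t (cmp C ka r) \<in> hom C Q A1" using t kar by blast
  have "cmp C p1 (cmp C \<tau> (add C t (cmp C ka r))) = add C (cmp C p1 z) (cmp C (cmp C a ka) r)"
    using assoc[OF t' tau p1] p1_tau cmp_add_r[OF t kar a] at assoc[OF r ka_hom a] by simp
  then show "cmp C p1 (cmp C \<tau> (add C t (cmp C ka r))) = cmp C p1 z"
    using ker_zero[OF ka a] cmp_zer_l[OF r objects(2)] add_zer[OF comp[OF z p1]] by simp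
  have "cmp C p2 (cmp C \<tau> (add C t (cmp C ka r))) = add C (cmp C f1 t) (cmp C (cmp C f1 ka) r)"
    using assoc[OF t' tau p2] p2_tau cmp_add_r[OF t kar f1] assoc[OF r ka_hom f1] by simp
  also have "\<dots> = add C (cmp C f1 t) (sub C (cmp C p2 z) (cmp C f1 t))"
    using g_comm assoc[OF r g kb_hom] defect by simp
  finally show "cmp C p2 (cmp C \<tau> (add C t (cmp C ka r))) = cmp C p2 z"
    using add_sub_cancel[OF comp[OF t f1] comp[OF z p2]] by simp
qed

text \<open>Exactness of \<open>A1 \<rightarrow> A0 \<oplus> B1 \<rightarrow> B0\<close> in the middle, seen from a projective \<open>Q\<close>,
  when \<open>h\<close> is mono and \<open>g\<close> is epi (a snake-lemma argument): if \<open>f0 z1 = b z2\<close>, then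
  \<open>ca z1 = 0\<close> since \<open>h\<close> is mono, so \<open>z1 = a t\<close>; the defect \<open>z2 - f1 t\<close> lies in \<open>Ker b\<close>
  and lifts along \<open>g\<close>, which corrects \<open>t\<close> to a lift of \<open>(z1, z2)\<close> along \<open>\<tau>\<close>.\<close>
lemma sigma_kernel_in_image:
  assumes h_mono: "mono C h" and g_epi: "epi C g" and Q: "projective C Q"
    and z: "z \<in> hom C Q P" and \<sigma>z: "cmp C sigma z = zer C Q B0"
  shows "\<exists>t\<in>hom C Q A1. cmp C \<tau> t = z"
proof -
  define z1 z2 where "z1 = cmp C p1 z" and "z2 = cmp C p2 z"
  have z1: "z1 \<in> hom C Q A0" and z2: "z2 \<in> hom C Q B1"
    unfolding z1_def z2_def using comp[OF z p1] comp[OF z p2] .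
  have "cmp C sigma z = sub C (cmp C f0 z1) (cmp C b z2)"
    unfolding sigma_def z1_def z2_def
    using cmp_sub_l[OF z comp[OF p1 f0] comp[OF p2 b]] assoc[OF z p1 f0] assoc[OF z p2 b] by simp
  then have fz: "cmp C f0 z1 = cmp C b z2"
    using \<sigma>z sub_zer_iff[OF comp[OF z1 f0] comp[OF z2 b]] by simp
  have "cmp C h (cmp C ca z1) = cmp C cb (cmp C b z2)"
    using assoc[OF z1 ca_hom h] h_comm assoc[OF z1 f0 cb_hom] fz by simp
  also have "\<dots> = zer C Q (cod C cb)"
    using assoc[OF z2 b cb_hom] cok_zero[OF cb b] cmp_zer_l[OF z2 homD(5)[OF cb_hom]] by simp
  finally have "cmp C ca z1 = zer C Q (cod C ca)"
    using mono_zero[OF h_mono h comp[OF z1 ca_hom]] by blast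
  then obtain t where t: "t \<in> hom C Q A1" and at: "cmp C a t = z1"
    using lift_through_cokernel[OF a ca Q z1] by blast
  have f1t: "cmp C f1 t \<in> hom C Q B1" using comp[OF t f1] .
  have "cmp C b (sub C z2 (cmp C f1 t)) = sub C (cmp C b z2) (cmp C f0 z1)"
    using cmp_sub_r[OF z2 f1t b] assoc[OF t f1 b] comm assoc[OF t a f0] at by simp
  then have "cmp C b (sub C z2 (cmp C f1 t)) = zer C Q B0"
    using fz sub_self[OF comp[OF z2 b]] by simp
  then obtain r where r: "r \<in> hom C Q (dom C kb)" and kbr: "cmp C kb r = sub C z2 (cmp C f1 t)"
    using ker_factor[OF kb b sub_hom[OF z2 f1t]] by blast
  obtain r' where r': "r' \<in> hom C Q (dom C ka)" and gr': "cmp C g r' = r"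
    using projective_lift[OF Q g_epi g r] by blast
  have "cmp C \<tau> (add C t (cmp C ka r')) = z"
    using tau_lift_by_correction[OF z t _ r'] at kbr gr' unfolding z1_def z2_def by simp
  then show ?thesis using add_hom[OF t comp[OF r' ka_hom]] by blast
qed

lemma induced_mono:
  assumes EP: "enough_projectives C" and h_mono: "mono C h" and g_epi: "epi C g"
    and s: "s \<in> hom C E B0" and sc: "cmp C s c = sigma"
  shows "mono C s"
proof (rule mono_by_projectives[OF EP s])
  fix Q y assume Q: "projective C Q" and y: "y \<in> hom C Q E" and sy: "cmp C s y = zer C Q B0"
  obtain z where z: "z \<in> hom C Q P" and cz: "cmp C c z = y"
    using projective_lift[OF Q cok_epi[OF c] c_hom y] by blast
  have "cmp C sigma z = zer C Q B0" using sc assoc[OF z c_hom s] cz sy by simp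
  then obtain t where t: "t \<in> hom C Q A1" and \<tau>t: "cmp C \<tau> t = z"
    using sigma_kernel_in_image[OF h_mono g_epi Q z] by blast
  show "y = zer C Q E"
    using cz \<tau>t assoc[OF t tau c_hom] c_tau cmp_zer_l[OF t E_ob] by simp
qed

end

section \<open>Pushout squares versus the induced maps\<close>

context induced_square
begin

lemma induced_presentation_exists:
  obtains P p1 p2 i1 i2 \<tau> c E
  where "presented_induced C A1 A0 B1 B0 a b f0 f1 P p1 p2 i1 i2 \<tau> c E ca cb h ka kb g"
proof (rule presentation_exists)
  fix P p1 p2 i1 i2 \<tau> c E
  assume pres: "presented_square C A1 A0 B1 B0 a b f0 f1 P p1 p2 i1 i2 \<tau> c E"
  have "presented_induced C A1 A0 B1 B0 a b f0 f1 P p1 p2 i1 i2 \<tau> c E ca cb h ka kb g"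
    by (rule presented_induced.intro[OF pres]; unfold_locales)
  then show thesis by (rule that)
qed

lemma induced_maps_if_pushout:
  assumes EP: "enough_projectives C" and JE: jointly_epic and WP: weak_pushout
  shows "iso C h \<and> epi C g"
proof -
  obtain P p1 p2 i1 i2 \<tau> c E
    where "presented_induced C A1 A0 B1 B0 a b f0 f1 P p1 p2 i1 i2 \<tau> c E ca cb h ka kb g"
    by (rule induced_presentation_exists)
  then interpret presented_induced C A1 A0 B1 B0 a b f0 f1 P p1 p2 i1 i2 \<tau> c E ca cb h ka kb g .
  show ?thesis
    using coker_iso_if_pushout[OF JE WP] kernel_map_epi_if_killed[OF EP weak_pushout_kills_kernel[OF WP kb]]
    by blast
qed

text \<open>Conversely, if \<open>h\<close> is iso and \<open>g\<close> epi, the map \<open>s : E \<rightarrow> B0\<close> from the pushout is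
  epi (as \<open>(f0, b)\<close> is jointly epic) and mono (by the diagram chase), hence iso.\<close>
lemma pushout_if_induced_maps:
  assumes EP: "enough_projectives C" and h_iso: "iso C h" and g_epi: "epi C g"
  shows "jointly_epic \<and> weak_pushout"
proof -
  obtain P p1 p2 i1 i2 \<tau> c E
    where "presented_induced C A1 A0 B1 B0 a b f0 f1 P p1 p2 i1 i2 \<tau> c E ca cb h ka kb g"
    by (rule induced_presentation_exists)
  then interpret presented_induced C A1 A0 B1 B0 a b f0 f1 P p1 p2 i1 i2 \<tau> c E ca cb h ka kb g .
  have h_mono: "mono C h" and h_epi: "epi C h"
    using iso_mono_epi[OF h_iso] by blast+
  have JE: jointly_epic using h_epi jointly_epic_iff_epi_coker by blast
  obtain s where s: "s \<in> hom C E B0" and sc: "cmp C s c = sigma"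
    using cok_factor[OF c tau sigma_hom sigma_tau] E_def by blast
  have "epi C s" using epi_left_factor[OF c_hom s] sc sigma_epi_if_jointly_epic[OF JE] by simp
  moreover have "mono C s" using induced_mono[OF EP h_mono g_epi s sc] .
  ultimately have "iso C s" using mono_epi_iso[OF s] by blast
  then show ?thesis using JE weak_pushout_if_induced_iso[OF s sc] by blast
qed

end

theorem lemma3p4:
  fixes C :: "('o, 'm) cat" and a b ka kb ca cb g h :: 'm and f :: "'m \<times> 'm"
  assumes "abelian C" and "enough_projectives C"
    and "obj_c C a" and "obj_c C b" and "mor1 C a b f"
    and "is_kernel C a ka" and "is_kernel C b kb"
    and "g \<in> hom C (dom C ka) (dom C kb)" and "cmp C kb g = cmp C (snd f) ka"
    and "is_cokernel C a ca" and "is_cokernel C b cb"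
    and "h \<in> hom C (cod C ca) (cod C cb)" and "cmp C h ca = cmp C cb (fst f)"
  shows "fully_cofaithful_c C a b f \<longleftrightarrow> iso C h \<and> epi C g"
proof -
  interpret induced_square C "dom C a" "cod C a" "dom C b" "cod C b" a b "fst f" "snd f" ca cb h ka kb g
    using assms by unfold_locales (auto simp: mor1_def hom_def)
  have "fully_cofaithful_c C a b f \<longleftrightarrow> jointly_epic \<and> weak_pushout"
    using fully_cofaithful_iff_pushout by simp
  also have "\<dots> \<longleftrightarrow> iso C h \<and> epi C g"
    using induced_maps_if_pushout pushout_if_induced_maps assms(2) by blast
  finally show ?thesis .
qed
end
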